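(* Suppose Assumptions A, B($\gamma$), C($\gamma$) are satisfied for some $\gamma\in(0,1]$. Let $\phi\in C^\infty_0(\mathbb{R}^d)$, $\tau\in(0,\infty)$, and let $u^m,u\in\mathbb{W}^1_p(-\infty,\infty)$, $m=1,2,\dots$, be such that $u^m\to u$ weakly in $\mathbb{W}^1_p(-\infty,\infty)$. For $m=1,2,\dots$ define $\chi_m(t)=(-m)\vee t\wedge m$, $\mathfrak{b}^i_{mt}=\chi_m(\mathfrak{b}^i_t)$, $b^i_{mt}=\chi_m(b^i_t)$, $c_{mt}=\chi_m(c_t)$. Then, as $m\to\infty$, the functions $$t\mapsto\int_0^t(b^i_{ms}D_iu^m_s,\phi)\,ds,\quad t\mapsto\int_0^t(\mathfrak{b}^i_{ms}u^m_s,D_i\phi)\,ds,\quad t\mapsto\int_0^t(c_{ms}u^m_s,\phi)\,ds$$ converge weakly in $\mathcal{L}_p([-\tau,\tau])$ to $$t\mapsto\int_0^t(b^i_sD_iu_s,\phi)\,ds,\quad t\mapsto\int_0^t(\mathfrak{b}^i_su_s,D_i\phi)\,ds,\quad t\mapsto\int_0^t(c_su_s,\phi)\,ds,$$ respectively.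
   Context: Fix $d\ge1$, $p\in(1,\infty)$, $p'=p/(p-1)$. $\mathcal{L}_p=\mathcal{L}_p(\mathbb{R}^d)$; $W^1_p$ the Sobolev space of $u\in\mathcal{L}_p$ with $Du\in\mathcal{L}_p$; $\mathbb{W}^1_p(-\infty,\infty)=\mathcal{L}_p(\mathbb{R};W^1_p)$; $(\cdot,\cdot)$ the $L_2(\mathbb{R}^d)$ pairing; $D_i=\partial/\partial x^i$; summation convention. $B_\rho(x)$ open ball. Coefficients $a^{ij}_t(x),\mathfrak{b}^i_t(x),b^i_t(x),c_t(x)$ on $\mathbb{R}\times\mathbb{R}^d$; $\mathfrak{b}=(\mathfrak{b}^i)$, $b=(b^i)$. Fixed constants: $K\ge0$, $\rho_0,\rho_1\in(0,1]$, $q=q(d,p)$ with $q>\min(d,p)$, $q>\min(d,p')$, $q\ge\max(d,p,p')$. Assumption A: (i) $a,\mathfrak{b},b,c$ real-valued Borel measurable, $c\ge0$; (ii) there is $\delta>0$ with $a^{ij}\xi^i\xi^j\ge\delta|\xi|^2$, $|a^{ij}|\le\delta^{-1}$; (iii) for every $x$, $t\mapsto\int_{B_1(0)}(|\mathfrak{b}_t(x+y)|+|b_t(x+y)|+c_t(x+y))\,dy$ is locally integrable to the power $p'$ on $\mathbb{R}$. Assumption B($\gamma$): for all $(t,x)$, $\int_{B_{\rho_1}(x)}\int_{B_{\rho_1}(x)}(|\mathfrak{b}_t(y)-\mathfrak{b}_t(z)|^q+|b_t(y)-b_t(z)|^q+|c_t(y)-c_t(z)|^q)\,dy\,dz\le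 K1_{q>d}+\rho_1^d\gamma$. Assumption C($\gamma$): for all $\rho\in(0,\rho_0]$, $s\in\mathbb{R}$, $i,j$: $\rho^{-2d-2}\int_s^{s+\rho^2}\sup_{x}\int_{B_\rho(x)}\int_{B_\rho(x)}|a^{ij}_t(y)-a^{ij}_t(z)|\,dy\,dz\,dt\le\gamma$. *)

theory Defs
  imports "HOL-Analysis.Analysis"
begin

definition partial_deriv :: "'n::finite \<Rightarrow> (real^'n \<Rightarrow> real) \<Rightarrow> real^'n \<Rightarrow> real" where
  "partial_deriv i f x = frechet_derivative f (at x) (axis i 1)"

coinductive smooth_fun :: "(real^'n::finite \<Rightarrow> real) \<Rightarrow> bool" where
  "(\<forall>x. f differentiable (at x)) \<Longrightarrow> (\<forall>i. smooth_fun (partial_deriv i f)) \<Longrightarrow> smooth_fun f"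

definition test_fun :: "(real^'n::finite \<Rightarrow> real) \<Rightarrow> bool" where
  "test_fun f \<longleftrightarrow> smooth_fun f \<and> compact (closure {x. f x \<noteq> 0})"

definition Lp :: "real \<Rightarrow> 'a measure \<Rightarrow> ('a \<Rightarrow> real) \<Rightarrow> bool" where
  "Lp p M f \<longleftrightarrow> f \<in> borel_measurable M \<and> integrable M (\<lambda>x. \<bar>f x\<bar> powr p)"

definition weak_conv_Lp :: "real \<Rightarrow> 'a measure \<Rightarrow> (nat \<Rightarrow> 'a \<Rightarrow> real) \<Rightarrow> ('a \<Rightarrow> real) \<Rightarrow> bool" where
  "weak_conv_Lp p M fs f \<longleftrightarrow> (\<forall>m. Lp p M (fs m)) \<and> Lp p M f \<and>
     (\<forall>g. Lp (p / (p - 1)) M g \<longrightarrow>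
        (\<lambda>m. \<integral>x. fs m x * g x \<partial>M) \<longlonglongrightarrow> (\<integral>x. f x * g x \<partial>M))"

definition weak_deriv :: "(real^'n::finite \<Rightarrow> real) \<Rightarrow> ('n \<Rightarrow> real^'n \<Rightarrow> real) \<Rightarrow> bool" where
  "weak_deriv f Df \<longleftrightarrow> (\<forall>i. \<forall>\<psi>. test_fun \<psi> \<longrightarrow>
     integrable lborel (\<lambda>x. f x * partial_deriv i \<psi> x) \<and>
     integrable lborel (\<lambda>x. Df i x * \<psi> x) \<and>
     (\<integral>x. f x * partial_deriv i \<psi> x \<partial>lborel) = - (\<integral>x. Df i x * \<psi> x \<partial>lborel))"

text \<open>u belongs to W^1_p(-infinity,infinity) = L_p(R; W^1_p(R^d)), with (weak) spatial gradient Du: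
  u and Du are jointly measurable p-th power integrable on R x R^d, and for a.e. t,
  Du t is the weak gradient of u t.\<close>
definition WW1p :: "real \<Rightarrow> (real \<Rightarrow> real^'n::finite \<Rightarrow> real) \<Rightarrow> ('n \<Rightarrow> real \<Rightarrow> real^'n \<Rightarrow> real) \<Rightarrow> bool" where
  "WW1p p u Du \<longleftrightarrow> Lp p (lborel \<Otimes>\<^sub>M lborel) (\<lambda>(t, x). u t x) \<and>
     (\<forall>i. Lp p (lborel \<Otimes>\<^sub>M lborel) (\<lambda>(t, x). Du i t x)) \<and>
     (AE t in lborel. weak_deriv (u t) (\<lambda>i. Du i t))"

definition weak_conv_WW1p :: "real \<Rightarrow> (nat \<Rightarrow> real \<Rightarrow> real^'n::finite \<Rightarrow> real) \<Rightarrow> (nat \<Rightarrow> 'n \<Rightarrow> real \<Rightarrow> real^'n \<Rightarrow> real)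
     \<Rightarrow> (real \<Rightarrow> real^'n \<Rightarrow> real) \<Rightarrow> ('n \<Rightarrow> real \<Rightarrow> real^'n \<Rightarrow> real) \<Rightarrow> bool" where
  "weak_conv_WW1p p us Dus u Du \<longleftrightarrow>
     (\<forall>m. WW1p p (us m) (Dus m)) \<and> WW1p p u Du \<and>
     weak_conv_Lp p (lborel \<Otimes>\<^sub>M lborel) (\<lambda>m (t, x). us m t x) (\<lambda>(t, x). u t x) \<and>
     (\<forall>i. weak_conv_Lp p (lborel \<Otimes>\<^sub>M lborel) (\<lambda>m (t, x). Dus m i t x) (\<lambda>(t, x). Du i t x))"

definition enn_powr :: "ennreal \<Rightarrow> real \<Rightarrow> ennreal" where
  "enn_powr e r = (if e = \<infinity> then \<infinity> else ennreal (enn2real e powr r))"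

definition chi :: "nat \<Rightarrow> real \<Rightarrow> real" where
  "chi m t = max (- real m) (min t (real m))"

text \<open>Assumption A. Coefficients: a i j t x, frb i t x (fraktur b), b i t x, c t x.\<close>
definition AssumptionA :: "real \<Rightarrow> ('n::finite \<Rightarrow> 'n \<Rightarrow> real \<Rightarrow> real^'n \<Rightarrow> real) \<Rightarrow> ('n \<Rightarrow> real \<Rightarrow> real^'n \<Rightarrow> real)
     \<Rightarrow> ('n \<Rightarrow> real \<Rightarrow> real^'n \<Rightarrow> real) \<Rightarrow> (real \<Rightarrow> real^'n \<Rightarrow> real) \<Rightarrow> bool" where
  "AssumptionA p a frb b c \<longleftrightarrow>
     (\<forall>i j. (\<lambda>(t, x). a i j t x) \<in> borel_measurable borel) \<and>
     (\<forall>i. (\<lambda>(t, x). frb i t x) \<in> borel_measurable borel) \<and>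
     (\<forall>i. (\<lambda>(t, x). b i t x) \<in> borel_measurable borel) \<and>
     (\<lambda>(t, x). c t x) \<in> borel_measurable borel \<and>
     (\<forall>t x. c t x \<ge> 0) \<and>
     (\<exists>\<delta>>0. (\<forall>t x (\<xi>::real^'n). (\<Sum>i\<in>UNIV. \<Sum>j\<in>UNIV. a i j t x * \<xi>$i * \<xi>$j) \<ge> \<delta> * (norm \<xi>)\<^sup>2) \<and>
            (\<forall>i j t x. \<bar>a i j t x\<bar> \<le> 1 / \<delta>)) \<and>
     (\<forall>x. \<forall>T1 T2. (\<integral>\<^sup>+ t\<in>{T1..T2}.
         enn_powr (\<integral>\<^sup>+ y\<in>ball 0 1. ennreal (norm (\<chi> i. frb i t (x + y)) + norm (\<chi> i. b i t (x + y)) + c t (x + y)) \<partial>lborel)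
                  (p / (p - 1)) \<partial>lborel) < \<infinity>)"

text \<open>Assumption B(gamma); d = CARD('n).\<close>
definition AssumptionB :: "real \<Rightarrow> real \<Rightarrow> real \<Rightarrow> ('n::finite \<Rightarrow> real \<Rightarrow> real^'n \<Rightarrow> real)
     \<Rightarrow> ('n \<Rightarrow> real \<Rightarrow> real^'n \<Rightarrow> real) \<Rightarrow> (real \<Rightarrow> real^'n \<Rightarrow> real) \<Rightarrow> real \<Rightarrow> bool" where
  "AssumptionB q K \<rho>1 frb b c \<gamma> \<longleftrightarrow>
     (\<forall>t x. (\<integral>\<^sup>+ y\<in>ball x \<rho>1. \<integral>\<^sup>+ z\<in>ball x \<rho>1.
         ennreal (norm ((\<chi> i. frb i t y) - (\<chi> i. frb i t z)) powr q
                + norm ((\<chi> i. b i t y) - (\<chi> i. b i t z)) powr q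
                + \<bar>c t y - c t z\<bar> powr q) \<partial>lborel \<partial>lborel)
       \<le> ennreal (K * (if q > real CARD('n) then 1 else 0) + \<rho>1 ^ CARD('n) * \<gamma>))"

definition AssumptionC :: "real \<Rightarrow> ('n::finite \<Rightarrow> 'n \<Rightarrow> real \<Rightarrow> real^'n \<Rightarrow> real) \<Rightarrow> real \<Rightarrow> bool" where
  "AssumptionC \<rho>0 a \<gamma> \<longleftrightarrow>
     (\<forall>\<rho>\<in>{0<..\<rho>0}. \<forall>s. \<forall>i j.
        ennreal (\<rho> powr (- 2 * real CARD('n) - 2)) *
        (\<integral>\<^sup>+ t\<in>{s..s + \<rho>\<^sup>2}. (SUP x. \<integral>\<^sup>+ y\<in>ball x \<rho>. \<integral>\<^sup>+ z\<in>ball x \<rho>.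
              ennreal \<bar>a i j t y - a i j t z\<bar> \<partial>lborel \<partial>lborel) \<partial>lborel)
        \<le> ennreal \<gamma>)"

end

theory Submission
  imports Defs
begin

text \<open>
  Each time integral has the form \<open>t \<mapsto> \<integral>\<^sub>0\<^sup>t \<integral> \<chi>\<^sub>m(\<beta>) V\<^sub>m \<psi> dx ds\<close>, where \<open>\<beta>\<close> is the
  coefficient, \<open>V\<^sub>m\<close> is \<open>u\<^sup>m\<close> or \<open>D\<^sub>i u\<^sup>m\<close> and \<open>\<psi>\<close> is \<open>\<phi>\<close> or \<open>D\<^sub>i \<phi>\<close>. Paired with
  \<open>g \<in> L\<^sub>p\<^sub>'(-\<tau>,\<tau>)\<close>, Fubini turns it into the pairing of \<open>V\<^sub>m\<close> with
  \<open>H(s) 1\<^sub>[\<^sub>-\<^sub>\<tau>\<^sub>,\<^sub>\<tau>\<^sub>](s) \<chi>\<^sub>m(\<beta>(s,x)) \<psi>(x)\<close> on \<open>\<real> \<times> \<real>\<^sup>d\<close>, where \<open>H\<close> is a bounded primitive of \<open>g\<close>.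
  Assumptions A and B put \<open>1\<^sub>[\<^sub>-\<^sub>\<tau>\<^sub>,\<^sub>\<tau>\<^sub>] \<beta> \<psi>\<close> into \<open>L\<^sub>p\<^sub>'(\<real> \<times> \<real>\<^sup>d)\<close>: on each ball the mean
  oscillation bound of B and the local \<open>L\<^sub>1\<close> bound of A control the \<open>L\<^sub>p\<^sub>'\<close> norm of \<open>\<beta>\<close>. The
  truncated weights are dominated by the limit weight and differ from it only on the sets
  \<open>{|\<beta>| > m}\<close>, which shrink to the empty set; a gliding hump argument, which avoids the
  uniform boundedness principle, shows that the weak limit is unaffected by such perturbations.
\<close>

lemma powr_le_one_add_powr:
  fixes t :: real
  assumes "0 \<le> r" "r \<le> q" "0 \<le> t"
  shows "t powr r \<le> 1 + t powr q"
proof (cases "t \<le> 1")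
  case True
  then have "t powr r \<le> 1" using powr_mono2[of r t 1] assms by simp
  then show ?thesis using powr_ge_zero[of t q] by linarith
next
  case False
  then have "t powr r \<le> t powr q" using assms by (intro powr_mono) auto
  then show ?thesis by simp
qed

lemma Lp_dominated:
  assumes "Lp r N g" "f \<in> borel_measurable N" "\<And>z. \<bar>f z\<bar> \<le> \<bar>g z\<bar>" "0 < r"
  shows "Lp r N f"
  unfolding Lp_def
proof
  show "integrable N (\<lambda>z. \<bar>f z\<bar> powr r)"
  proof (rule Bochner_Integration.integrable_bound)
    show "integrable N (\<lambda>z. \<bar>g z\<bar> powr r)" using assms(1) by (simp add: Lp_def)
    show "AE z in N. norm (\<bar>f z\<bar> powr r) \<le> norm (\<bar>g z\<bar> powr r)"
      using assms(3,4) by (intro AE_I2) (simp add: powr_mono2)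
  qed (use assms(2) in measurable)
qed fact

lemma Lp_cmult: "Lp r N f \<Longrightarrow> Lp r N (\<lambda>z. c * f z)"
  unfolding Lp_def by (auto simp: abs_mult powr_mult)

lemma integrable_mult_Lp_conjugate:
  fixes f g :: "'a \<Rightarrow> real"
  assumes p: "1 < p" and f: "Lp p N f" and g: "Lp (p / (p - 1)) N g"
  shows "integrable N (\<lambda>z. f z * g z)"
proof (rule Bochner_Integration.integrable_bound)
  let ?q = "p / (p - 1)"
  show "integrable N (\<lambda>z. \<bar>f z\<bar> powr p + \<bar>g z\<bar> powr ?q)"
    using f g by (auto simp: Lp_def)
  show "(\<lambda>z. f z * g z) \<in> borel_measurable N" using f g by (auto simp: Lp_def)
  have q: "1 < ?q" "1 / p + 1 / ?q = 1" using p by (auto simp: field_simps)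
  show "AE z in N. norm (f z * g z) \<le> norm (\<bar>f z\<bar> powr p + \<bar>g z\<bar> powr ?q)"
  proof (rule AE_I2)
    fix z
    have div_le: "x / c \<le> x" if "1 \<le> c" "0 \<le> x" for x c :: real
      using that by (simp add: divide_le_eq mult_le_cancel_left1)
    have "\<bar>f z\<bar> * \<bar>g z\<bar> \<le> \<bar>f z\<bar> powr p / p + \<bar>g z\<bar> powr ?q / ?q"
      by (rule Youngs_inequality) (use p q in auto)
    also have "\<dots> \<le> \<bar>f z\<bar> powr p + \<bar>g z\<bar> powr ?q"
      by (intro add_mono div_le) (use p q in auto)
    finally show "norm (f z * g z) \<le> norm (\<bar>f z\<bar> powr p + \<bar>g z\<bar> powr ?q)"
      by (simp add: abs_mult)
  qed
qed

lemma integrable_mult_dominated: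
  fixes A g r :: "'a \<Rightarrow> real"
  assumes "integrable N (\<lambda>z. A z * r z)" "A \<in> borel_measurable N" "g \<in> borel_measurable N"
    "\<And>z. \<bar>g z\<bar> \<le> \<bar>r z\<bar>"
  shows "integrable N (\<lambda>z. A z * g z)"
proof (rule Bochner_Integration.integrable_bound[OF assms(1)])
  show "(\<lambda>z. A z * g z) \<in> borel_measurable N" using assms by measurable
  show "AE z in N. norm (A z * g z) \<le> norm (A z * r z)"
    using assms(4) by (intro AE_I2) (simp add: abs_mult mult_left_mono)
qed

lemma abs_integral_mult_dominated_on:
  fixes A g r :: "'a \<Rightarrow> real"
  assumes "integrable N (\<lambda>z. A z * r z)" "A \<in> borel_measurable N" "g \<in> borel_measurable N"
    "\<And>z. \<bar>g z\<bar> \<le> indicator S z * \<bar>r z\<bar>" "S \<in> sets N"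
  shows "\<bar>\<integral>z. A z * g z \<partial>N\<bar> \<le> (\<integral>z. indicator S z * \<bar>A z * r z\<bar> \<partial>N)"
proof -
  have "\<bar>g z\<bar> \<le> \<bar>r z\<bar>" for z using assms(4)[of z] by (cases "z \<in> S") auto
  then have "integrable N (\<lambda>z. \<bar>A z * g z\<bar>)"
    by (intro integrable_abs integrable_mult_dominated[OF assms(1-3)])
  moreover have "integrable N (\<lambda>z. indicator S z * \<bar>A z * r z\<bar>)"
    using integrable_real_mult_indicator[OF assms(5) integrable_abs[OF assms(1)]]
    by (simp add: mult.commute)
  ultimately have "(\<integral>z. \<bar>A z * g z\<bar> \<partial>N) \<le> (\<integral>z. indicator S z * \<bar>A z * r z\<bar> \<partial>N)"
  proof (rule integral_mono)
    fix z show "\<bar>A z * g z\<bar> \<le> indicator S z * \<bar>A z * r z\<bar>"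
      using assms(4)[of z] by (cases "z \<in> S") (auto simp: abs_mult intro: mult_left_mono)
  qed
  then show ?thesis by (rule order_trans[OF integral_abs_bound])
qed

lemma tendsto_integral_indicator_vanishing:
  fixes G :: "'a \<Rightarrow> real"
  assumes G: "integrable N G" and E: "\<And>n. E n \<in> sets N"
    and dec: "\<And>m n. m \<le> n \<Longrightarrow> E n \<subseteq> E m" and vanish: "\<And>z. \<exists>n. z \<notin> E n"
  shows "(\<lambda>n. \<integral>z. indicator (E n) z * G z \<partial>N) \<longlonglongrightarrow> 0"
proof -
  have "(\<lambda>n. \<integral>z. indicator (E n) z * G z \<partial>N) \<longlonglongrightarrow> (\<integral>z. 0 \<partial>N)"
  proof (rule integral_dominated_convergence[where w="\<lambda>z. \<bar>G z\<bar>"])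
    show "(\<lambda>z. indicator (E n) z * G z) \<in> borel_measurable N" for n
      using G E by (intro borel_measurable_times borel_measurable_indicator) auto
    show "AE z in N. (\<lambda>n. indicator (E n) z * G z) \<longlonglongrightarrow> 0"
    proof (rule AE_I2)
      fix z obtain n0 where "z \<notin> E n0" using vanish by blast
      then have "eventually (\<lambda>n. indicator (E n) z * G z = 0) sequentially"
        using dec unfolding eventually_sequentially by (metis indicator_simps(2) mult_zero_left subsetD)
      then show "(\<lambda>n. indicator (E n) z * G z) \<longlonglongrightarrow> 0" by (rule tendsto_eventually)
    qed
  qed (use G in \<open>auto simp: indicator_def\<close>)
  then show ?thesis by simp
qed

section \<open>Gliding hump\<close>

lemma abs_integral_hump_le:
  fixes U V r S \<rho> w :: "'a \<Rightarrow> real"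
  assumes U: "integrable N (\<lambda>z. U z * r z)" "U \<in> borel_measurable N"
    and V: "integrable N (\<lambda>z. V z * r z)" "V \<in> borel_measurable N"
    and meas: "S \<in> borel_measurable N" "\<rho> \<in> borel_measurable N" "w \<in> borel_measurable N"
    and bounds: "\<And>z. \<bar>S z\<bar> \<le> \<bar>r z\<bar>" "\<And>z. \<bar>\<rho> z\<bar> \<le> \<bar>r z\<bar>" "\<And>z. \<bar>w z\<bar> \<le> \<bar>r z\<bar>"
    and E: "E \<in> sets N" "\<And>z. z \<notin> E \<Longrightarrow> \<rho> z = 0"
    and E': "E' \<in> sets N" "\<And>z. z \<in> E' \<Longrightarrow> S z = 0" "\<And>z. z \<notin> E' \<Longrightarrow> w z = S z + \<rho> z"
  shows "\<bar>\<integral>z. U z * \<rho> z \<partial>N\<bar> \<le> \<bar>(\<integral>z. U z * w z \<partial>N) - (\<integral>z. V z * w z \<partial>N)\<bar>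
      + \<bar>(\<integral>z. U z * S z \<partial>N) - (\<integral>z. V z * S z \<partial>N)\<bar>
      + 2 * (\<integral>z. indicator E' z * \<bar>U z * r z\<bar> \<partial>N) + (\<integral>z. indicator E z * \<bar>V z * r z\<bar> \<partial>N)
      + 2 * (\<integral>z. indicator E' z * \<bar>V z * r z\<bar> \<partial>N)"
proof -
  define R where "R z = \<rho> z * indicator E' z" for z
  define T where "T z = indicator E' z * w z" for z
  have RT: "R \<in> borel_measurable N" "T \<in> borel_measurable N"
    unfolding R_def T_def using meas E' by measurable
  have R: "\<bar>R z\<bar> \<le> indicator E' z * \<bar>r z\<bar>" and T: "\<bar>T z\<bar> \<le> indicator E' z * \<bar>r z\<bar>" for z
    using bounds by (auto simp: R_def T_def indicator_def)
  have \<rho>: "\<bar>\<rho> z\<bar> \<le> indicator E z * \<bar>r z\<bar>" for z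
    using bounds(2)[of z] E(2)[of z] by (auto simp: indicator_def)
  have RT': "\<bar>R z\<bar> \<le> \<bar>r z\<bar>" "\<bar>T z\<bar> \<le> \<bar>r z\<bar>" for z
    using R[of z] T[of z] by (cases "z \<in> E'"; simp)+
  have split: "(\<integral>z. A z * w z \<partial>N) = (\<integral>z. A z * S z \<partial>N) + (\<integral>z. A z * \<rho> z \<partial>N)
      - (\<integral>z. A z * R z \<partial>N) + (\<integral>z. A z * T z \<partial>N)"
    if A: "integrable N (\<lambda>z. A z * r z)" "A \<in> borel_measurable N" for A
  proof -
    have decomp: "w z = S z + \<rho> z - R z + T z" for z
      using E'(2,3)[of z] by (cases "z \<in> E'") (auto simp: R_def T_def)
    have "(\<integral>z. A z * w z \<partial>N) = (\<integral>z. A z * S z + A z * \<rho> z - A z * R z + A z * T z \<partial>N)"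
      by (subst decomp) (simp add: algebra_simps)
    moreover have "integrable N (\<lambda>z. A z * S z)" "integrable N (\<lambda>z. A z * \<rho> z)"
      "integrable N (\<lambda>z. A z * R z)" "integrable N (\<lambda>z. A z * T z)"
      using integrable_mult_dominated[OF A] meas bounds RT RT' by auto
    ultimately show ?thesis by simp
  qed
  show ?thesis
    using split[OF U] split[OF V]
      abs_integral_mult_dominated_on[OF U RT(1) R E'(1)] abs_integral_mult_dominated_on[OF U RT(2) T E'(1)]
      abs_integral_mult_dominated_on[OF V meas(2) \<rho> E(1)]
      abs_integral_mult_dominated_on[OF V RT(1) R E'(1)] abs_integral_mult_dominated_on[OF V RT(2) T E'(1)]
    by linarith
qed

lemma gliding_hump_sequence:
  fixes \<rho> :: "nat \<Rightarrow> 'a \<Rightarrow> real" and r :: "'a \<Rightarrow> real" and E :: "nat \<Rightarrow> 'a set"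
  assumes freq: "frequently P sequentially"
    and tail: "\<And>m. eventually (Q m) sequentially"
    and close: "\<And>S. S \<in> borel_measurable N \<Longrightarrow> (\<And>z. \<bar>S z\<bar> \<le> \<bar>r z\<bar>) \<Longrightarrow>
      eventually (C S) sequentially"
    and \<rho>: "\<And>m. \<rho> m \<in> borel_measurable N" "\<And>m z. \<bar>\<rho> m z\<bar> \<le> \<bar>r z\<bar>"
      "\<And>m z. z \<notin> E m \<Longrightarrow> \<rho> m z = 0"
    and E: "\<And>n. E n \<in> sets N" "\<And>m n. m \<le> n \<Longrightarrow> E n \<subseteq> E m"
  obtains mk nk S where "\<And>k. P (mk k)" "\<And>k. C (S k) (mk k)" "\<And>k. Q (mk k) (nk k)"
    "\<And>k. mk k < nk k" "\<And>k. nk k \<le> mk (Suc k)"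
    "\<And>k. S k \<in> borel_measurable N" "\<And>k z. \<bar>S k z\<bar> \<le> \<bar>r z\<bar>" "\<And>k z. z \<in> E (mk k) \<Longrightarrow> S k z = 0"
    "\<And>k. S (Suc k) = (\<lambda>z. S k z + \<rho> (mk k) z * indicator (- E (nk k)) z)"
proof -
  define good where "good x \<longleftrightarrow> (case x of (m, S) \<Rightarrow> P m \<and> C S m \<and> S \<in> borel_measurable N \<and>
      (\<forall>z. \<bar>S z\<bar> \<le> \<bar>r z\<bar>) \<and> (\<forall>z\<in>E m. S z = 0))" for x :: "nat \<times> ('a \<Rightarrow> real)"
  define step where "step x y \<longleftrightarrow> (case x of (m, S) \<Rightarrow> case y of (m', S') \<Rightarrow>
      \<exists>n. Q m n \<and> m < n \<and> n \<le> m' \<and> S' = (\<lambda>z. S z + \<rho> m z * indicator (- E n) z))"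
    for x y :: "nat \<times> ('a \<Rightarrow> real)"
  have good_after: "\<exists>m\<ge>n0. good (m, S)"
    if S: "S \<in> borel_measurable N" "\<And>z. \<bar>S z\<bar> \<le> \<bar>r z\<bar>" "\<And>m. m \<ge> n0 \<Longrightarrow> \<forall>z\<in>E m. S z = 0"
    for S n0
  proof -
    have "frequently (\<lambda>m. P m \<and> C S m \<and> m \<ge> n0) sequentially"
      using frequently_eventually_frequently[OF freq eventually_conj[OF close[OF S(1,2)] eventually_ge_at_top]] .
    then obtain m where "P m" "C S m" "m \<ge> n0" by (auto simp: frequently_sequentially)
    then show ?thesis using S by (auto simp: good_def)
  qed
  have "\<exists>f. \<forall>k. good (f k) \<and> step (f k) (f (Suc k))"
  proof (rule dependent_nat_choice)
    show "\<exists>x. good x" using good_after[of "\<lambda>_. 0" 0] by auto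
  next
    fix x :: "nat \<times> ('a \<Rightarrow> real)" and k assume "good x"
    then obtain m S where x: "x = (m, S)" and S: "S \<in> borel_measurable N" "\<And>z. \<bar>S z\<bar> \<le> \<bar>r z\<bar>"
      "\<And>z. z \<in> E m \<Longrightarrow> S z = 0" by (cases x) (auto simp: good_def)
    obtain n0 where n0: "\<forall>n\<ge>n0. Q m n" using tail[of m] by (auto simp: eventually_sequentially)
    define n where "n = max (Suc m) n0"
    define S' where "S' z = S z + \<rho> m z * indicator (- E n) z" for z
    have "S' \<in> borel_measurable N" unfolding S'_def using S(1) \<rho>(1) E(1) by measurable
    moreover have "\<bar>S' z\<bar> \<le> \<bar>r z\<bar>" for z
      using S(2,3)[of z] \<rho>(2)[of m z] \<rho>(3)[of z m] by (cases "z \<in> E m") (auto simp: S'_def indicator_def)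
    moreover have "\<forall>z\<in>E m'. S' z = 0" if "m' \<ge> n" for m'
    proof -
      have "E m' \<subseteq> E n" "E n \<subseteq> E m" using that E(2) by (auto simp: n_def)
      then show ?thesis using S(3) by (auto simp: S'_def indicator_def)
    qed
    ultimately obtain m' where "good (m', S')" "m' \<ge> n"
      using good_after[of S' n] by blast
    moreover have "Q m n" "m < n" using n0 by (auto simp: n_def)
    ultimately show "\<exists>y. good y \<and> step x y"
      by (intro exI[of _ "(m', S')"]) (auto simp: step_def x S'_def[abs_def])
  qed
  then obtain f where f: "\<And>k. good (f k)" "\<And>k. step (f k) (f (Suc k))" by blast
  have "\<forall>k. \<exists>n. Q (fst (f k)) n \<and> fst (f k) < n \<and> n \<le> fst (f (Suc k)) \<and>
      snd (f (Suc k)) = (\<lambda>z. snd (f k) z + \<rho> (fst (f k)) z * indicator (- E n) z)"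
  proof
    fix k show "\<exists>n. Q (fst (f k)) n \<and> fst (f k) < n \<and> n \<le> fst (f (Suc k)) \<and>
      snd (f (Suc k)) = (\<lambda>z. snd (f k) z + \<rho> (fst (f k)) z * indicator (- E n) z)"
      using f(2)[of k] by (cases "f k"; cases "f (Suc k)") (simp add: step_def)
  qed
  from choice[OF this] obtain nk where "\<forall>k. Q (fst (f k)) (nk k) \<and> fst (f k) < nk k \<and>
      nk k \<le> fst (f (Suc k)) \<and>
      snd (f (Suc k)) = (\<lambda>z. snd (f k) z + \<rho> (fst (f k)) z * indicator (- E (nk k)) z)"
    by blast
  moreover have "P (fst (f k)) \<and> C (snd (f k)) (fst (f k)) \<and> snd (f k) \<in> borel_measurable N \<and>
      (\<forall>z. \<bar>snd (f k) z\<bar> \<le> \<bar>r z\<bar>) \<and> (\<forall>z\<in>E (fst (f k)). snd (f k) z = 0)" for k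
    using f(1)[of k] by (cases "f k") (simp add: good_def)
  ultimately show ?thesis
    by (intro that[of "\<lambda>k. fst (f k)" "\<lambda>k. snd (f k)" nk]) blast+
qed

lemma gliding_hump_limit:
  fixes \<rho> S :: "nat \<Rightarrow> 'a \<Rightarrow> real" and r :: "'a \<Rightarrow> real"
  assumes S: "\<And>k. S k \<in> borel_measurable N" "\<And>k z. \<bar>S k z\<bar> \<le> \<bar>r z\<bar>"
      "\<And>k. S (Suc k) = (\<lambda>z. S k z + \<rho> (mk k) z * indicator (- E (nk k)) z)"
    and \<rho>: "\<And>m z. z \<notin> E m \<Longrightarrow> \<rho> m z = 0"
    and mk: "\<And>k. mk k < nk k" "\<And>k. nk k \<le> mk (Suc k)"
    and E: "\<And>m n. m \<le> n \<Longrightarrow> E n \<subseteq> E m" "\<And>z. \<exists>n. z \<notin> E n"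
  obtains w where "w \<in> borel_measurable N" "\<And>z. \<bar>w z\<bar> \<le> \<bar>r z\<bar>"
    "\<And>k z. z \<notin> E (nk k) \<Longrightarrow> w z = S (Suc k) z"
proof -
  have mono_mk: "strict_mono mk"
    by (rule strict_monoI_Suc) (use mk less_le_trans in blast)
  have stable: "S j z = S (Suc k) z" if "Suc k \<le> j" "z \<notin> E (nk k)" for j k z
    using that(1)
  proof (induction j rule: dec_induct)
    case (step j)
    have "nk k \<le> mk j"
      using mk(2)[of k] step(1) mono_mk by (meson order_trans strict_mono_less_eq)
    then have "z \<notin> E (mk j)" using E(1) that(2) by blast
    then show ?case using step(3) S(3)[of j] \<rho> by simp
  qed simp
  define w where "w z = lim (\<lambda>j. S j z)" for z
  have w: "w z = S (Suc k) z" and lim: "(\<lambda>j. S j z) \<longlonglongrightarrow> w z" if "z \<notin> E (nk k)" for z k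
  proof -
    have "eventually (\<lambda>j. S j z = S (Suc k) z) sequentially"
      unfolding eventually_sequentially using stable that by blast
    then have "(\<lambda>j. S j z) \<longlonglongrightarrow> S (Suc k) z" by (rule tendsto_eventually)
    then show "w z = S (Suc k) z" unfolding w_def by (rule limI)
    with \<open>(\<lambda>j. S j z) \<longlonglongrightarrow> S (Suc k) z\<close> show "(\<lambda>j. S j z) \<longlonglongrightarrow> w z" by simp
  qed
  have ex: "\<exists>k. z \<notin> E (nk k)" for z
  proof -
    obtain n where "z \<notin> E n" using E(2) by blast
    moreover have "n \<le> nk n"
      using strict_mono_imp_increasing[OF mono_mk, of n] mk(1)[of n] by linarith
    ultimately show ?thesis using E(1) by blast
  qed
  show ?thesis
  proof (rule that)
    show "w \<in> borel_measurable N"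
      by (rule borel_measurable_LIMSEQ_real[where u=S]) (use lim ex S(1) in blast)+
    show "\<bar>w z\<bar> \<le> \<bar>r z\<bar>" for z using ex[of z] w S(2) by metis
  qed (rule w)
qed

text \<open>
  If the pairings did not tend to zero, disjoint pieces of infinitely many \<open>\<rho> m\<close> could be glued
  into a single test function \<open>w\<close>, dominated by \<open>r\<close>, against which \<open>Vs m\<close> does not converge.
\<close>

lemma gliding_hump:
  fixes Vs \<rho> :: "nat \<Rightarrow> 'a \<Rightarrow> real" and V r :: "'a \<Rightarrow> real" and E :: "nat \<Rightarrow> 'a set"
  assumes weak: "\<And>w. w \<in> borel_measurable N \<Longrightarrow> (\<And>z. \<bar>w z\<bar> \<le> \<bar>r z\<bar>) \<Longrightarrow>
        (\<lambda>m. \<integral>z. Vs m z * w z \<partial>N) \<longlonglongrightarrow> (\<integral>z. V z * w z \<partial>N)"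
    and Vs: "\<And>m. integrable N (\<lambda>z. Vs m z * r z)" "\<And>m. Vs m \<in> borel_measurable N"
    and V: "integrable N (\<lambda>z. V z * r z)" "V \<in> borel_measurable N"
    and \<rho>: "\<And>m. \<rho> m \<in> borel_measurable N" "\<And>m z. \<bar>\<rho> m z\<bar> \<le> \<bar>r z\<bar>"
      "\<And>m z. z \<notin> E m \<Longrightarrow> \<rho> m z = 0"
    and E: "\<And>n. E n \<in> sets N" "\<And>m n. m \<le> n \<Longrightarrow> E n \<subseteq> E m" "\<And>z. \<exists>n. z \<notin> E n"
  shows "(\<lambda>m. \<integral>z. Vs m z * \<rho> m z \<partial>N) \<longlonglongrightarrow> 0"
proof (rule ccontr)
  define a where "a m = (\<integral>z. Vs m z * \<rho> m z \<partial>N)" for m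
  assume "\<not> ?thesis"
  then obtain \<epsilon> where \<epsilon>: "\<epsilon> > 0" and freq: "frequently (\<lambda>m. \<epsilon> \<le> \<bar>a m\<bar>) sequentially"
    unfolding tendsto_iff a_def by (auto simp: dist_real_def not_eventually not_less)
  define e where "e = \<epsilon> / 8"
  have e: "e > 0" using \<epsilon> by (simp add: e_def)
  define tail where "tail U n = (\<integral>z. indicator (E n) z * \<bar>U z * r z\<bar> \<partial>N)" for U n
  have tail_small: "eventually (\<lambda>n. tail U n < e) sequentially" if "integrable N (\<lambda>z. U z * r z)" for U
  proof -
    have "(\<lambda>n. tail U n) \<longlonglongrightarrow> 0"
      unfolding tail_def by (rule tendsto_integral_indicator_vanishing[OF _ E]) (use that in auto)
    from order_tendstoD(2)[OF this e] show ?thesis .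
  qed
  have close: "eventually (\<lambda>m. \<bar>(\<integral>z. Vs m z * S z \<partial>N) - (\<integral>z. V z * S z \<partial>N)\<bar> < e) sequentially"
    if "S \<in> borel_measurable N" "\<And>z. \<bar>S z\<bar> \<le> \<bar>r z\<bar>" for S
    using tendstoD[OF weak[OF that] e] by (simp add: dist_real_def)
  obtain mk nk S where hump: "\<And>k. \<epsilon> \<le> \<bar>a (mk k)\<bar> \<and> tail V (mk k) < e"
    "\<And>k. \<bar>(\<integral>z. Vs (mk k) z * S k z \<partial>N) - (\<integral>z. V z * S k z \<partial>N)\<bar> < e"
    "\<And>k. tail (Vs (mk k)) (nk k) < e \<and> tail V (nk k) < e"
    and mk: "\<And>k. mk k < nk k" "\<And>k. nk k \<le> mk (Suc k)"
    and S: "\<And>k. S k \<in> borel_measurable N" "\<And>k z. \<bar>S k z\<bar> \<le> \<bar>r z\<bar>"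
      "\<And>k z. z \<in> E (mk k) \<Longrightarrow> S k z = 0"
      "\<And>k. S (Suc k) = (\<lambda>z. S k z + \<rho> (mk k) z * indicator (- E (nk k)) z)"
  proof (rule gliding_hump_sequence[where Q="\<lambda>m n. tail (Vs m) n < e \<and> tail V n < e",
        OF frequently_eventually_frequently[OF freq tail_small[OF V(1)]] _ close \<rho> E(1,2)])
    show "eventually (\<lambda>n. tail (Vs m) n < e \<and> tail V n < e) sequentially" for m
      using tail_small[OF Vs(1)] tail_small[OF V(1)] by (rule eventually_conj)
  qed (assumption | rule that)+
  obtain w where w: "w \<in> borel_measurable N" "\<And>z. \<bar>w z\<bar> \<le> \<bar>r z\<bar>"
    "\<And>k z. z \<notin> E (nk k) \<Longrightarrow> w z = S (Suc k) z"
    using S(1,2,4) \<rho>(3) mk E(2,3) by (rule gliding_hump_limit) (assumption | rule that)+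
  have far: "2 * e \<le> \<bar>(\<integral>z. Vs (mk k) z * w z \<partial>N) - (\<integral>z. V z * w z \<partial>N)\<bar>" for k
  proof -
    have "\<bar>a (mk k)\<bar> \<le> \<bar>(\<integral>z. Vs (mk k) z * w z \<partial>N) - (\<integral>z. V z * w z \<partial>N)\<bar>
        + \<bar>(\<integral>z. Vs (mk k) z * S k z \<partial>N) - (\<integral>z. V z * S k z \<partial>N)\<bar>
        + 2 * tail (Vs (mk k)) (nk k) + tail V (mk k) + 2 * tail V (nk k)"
      unfolding a_def tail_def
    proof (rule abs_integral_hump_le[OF Vs(1,2) V S(1) \<rho>(1) w(1) S(2) \<rho>(2) w(2) E(1) \<rho>(3) E(1)])
      show "S k z = 0" if "z \<in> E (nk k)" for z
        using S(3) that E(2)[of "mk k" "nk k"] mk(1)[of k] by auto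
      show "w z = S k z + \<rho> (mk k) z" if "z \<notin> E (nk k)" for z
        using w(3)[OF that] S(4)[of k] that by simp
    qed
    then show ?thesis using hump[of k] by (simp add: e_def)
  qed
  have "strict_mono mk" by (rule strict_monoI_Suc) (use mk less_le_trans in blast)
  from tendstoD[OF LIMSEQ_subseq_LIMSEQ[OF weak[OF w(1,2)] this] e]
  obtain k where "\<bar>(\<integral>z. Vs (mk k) z * w z \<partial>N) - (\<integral>z. V z * w z \<partial>N)\<bar> < e"
    by (auto simp: eventually_sequentially dist_real_def)
  with far[of k] e show False by linarith
qed

lemma weak_conv_Lp_tendsto_dominated_perturbation:
  fixes Vs :: "nat \<Rightarrow> 'a \<Rightarrow> real" and V r :: "'a \<Rightarrow> real" and W :: "nat \<Rightarrow> 'a \<Rightarrow> real"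
  assumes p: "1 < p" and weak: "weak_conv_Lp p N Vs V"
    and r: "Lp (p / (p - 1)) N r"
    and W: "\<And>m. W m \<in> borel_measurable N" "\<And>m z. \<bar>W m z - r z\<bar> \<le> \<bar>r z\<bar>"
      "\<And>m z. z \<notin> E m \<Longrightarrow> W m z = r z"
    and E: "\<And>n. E n \<in> sets N" "\<And>m n. m \<le> n \<Longrightarrow> E n \<subseteq> E m" "\<And>z. \<exists>n. z \<notin> E n"
  shows "(\<lambda>m. \<integral>z. Vs m z * W m z \<partial>N) \<longlonglongrightarrow> (\<integral>z. V z * r z \<partial>N)"
proof -
  have Vs: "\<And>m. Lp p N (Vs m)" and V: "Lp p N V"
    and lim: "\<And>g. Lp (p / (p - 1)) N g \<Longrightarrow> (\<lambda>m. \<integral>x. Vs m x * g x \<partial>N) \<longlonglongrightarrow> (\<integral>x. V x * g x \<partial>N)"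
    using weak by (auto simp: weak_conv_Lp_def)
  have rm: "r \<in> borel_measurable N" using r by (simp add: Lp_def)
  define \<rho> where "\<rho> m z = W m z - r z" for m z
  have \<rho>m: "\<rho> m \<in> borel_measurable N" for m unfolding \<rho>_def using W(1) rm by measurable
  have Vsr: "integrable N (\<lambda>z. Vs m z * r z)" for m by (rule integrable_mult_Lp_conjugate[OF p Vs r])
  have "(\<lambda>m. \<integral>z. Vs m z * \<rho> m z \<partial>N) \<longlonglongrightarrow> 0"
  proof (rule gliding_hump[where r=r and E=E, OF _ Vsr _ _ _ \<rho>m _ _ E])
    show "(\<lambda>m. \<integral>z. Vs m z * w z \<partial>N) \<longlonglongrightarrow> (\<integral>z. V z * w z \<partial>N)"
      if "w \<in> borel_measurable N" "\<And>z. \<bar>w z\<bar> \<le> \<bar>r z\<bar>" for w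
      using p by (intro lim Lp_dominated[OF r that]) simp
  qed (use Vs V integrable_mult_Lp_conjugate[OF p V r] W in \<open>auto simp: Lp_def \<rho>_def\<close>)
  moreover have "(\<integral>z. Vs m z * W m z \<partial>N) = (\<integral>z. Vs m z * r z \<partial>N) + (\<integral>z. Vs m z * \<rho> m z \<partial>N)" for m
  proof -
    have "integrable N (\<lambda>z. Vs m z * \<rho> m z)"
      using W(2) Vs by (intro integrable_mult_dominated[OF Vsr _ \<rho>m]) (auto simp: Lp_def \<rho>_def)
    moreover have "(\<integral>z. Vs m z * W m z \<partial>N) = (\<integral>z. Vs m z * r z + Vs m z * \<rho> m z \<partial>N)"
      by (simp add: \<rho>_def algebra_simps)
    ultimately show ?thesis using Vsr by simp
  qed
  ultimately show ?thesis using tendsto_add[OF lim[OF r]] by fastforce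
qed

lemma abs_chi_le: "\<bar>chi m y\<bar> \<le> \<bar>y\<bar>"
  by (auto simp: chi_def)

lemma abs_chi_diff_le: "\<bar>chi m y - y\<bar> \<le> \<bar>y\<bar>"
  by (auto simp: chi_def)

lemma chi_eq_self: "\<bar>y\<bar> \<le> real m \<Longrightarrow> chi m y = y"
  by (auto simp: chi_def)

lemma borel_measurable_chi[measurable]:
  "f \<in> borel_measurable M \<Longrightarrow> (\<lambda>x. chi m (f x)) \<in> borel_measurable M"
  unfolding chi_def by (intro borel_measurable_max borel_measurable_min) auto

lemma weak_conv_Lp_tendsto_truncated:
  fixes \<beta> h :: "'a \<Rightarrow> real"
  assumes p: "1 < p" and weak: "weak_conv_Lp p N Vs V" and N: "space N = UNIV"
    and \<beta>: "\<beta> \<in> borel_measurable N" and h: "h \<in> borel_measurable N"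
    and Lp: "Lp (p / (p - 1)) N (\<lambda>z. h z * \<beta> z)"
  shows "(\<lambda>m. \<integral>z. Vs m z * (h z * chi m (\<beta> z)) \<partial>N) \<longlonglongrightarrow> (\<integral>z. V z * (h z * \<beta> z) \<partial>N)"
proof (rule weak_conv_Lp_tendsto_dominated_perturbation[OF p weak Lp, where E="\<lambda>m. {z. real m < \<bar>\<beta> z\<bar>}"])
  show "(\<lambda>z. h z * chi m (\<beta> z)) \<in> borel_measurable N" for m using \<beta> h by measurable
  show "\<bar>h z * chi m (\<beta> z) - h z * \<beta> z\<bar> \<le> \<bar>h z * \<beta> z\<bar>" for m z
    using abs_chi_diff_le[of m "\<beta> z"]
    by (simp add: right_diff_distrib[symmetric] abs_mult mult_left_mono)
  show "{z. real n < \<bar>\<beta> z\<bar>} \<in> sets N" for n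
  proof -
    have "{z \<in> space N. real n < \<bar>\<beta> z\<bar>} \<in> sets N" using \<beta> by measurable
    then show ?thesis using N by simp
  qed
  show "\<exists>n. z \<notin> {z. real n < \<bar>\<beta> z\<bar>}" for z
    using real_arch_simple[of "\<bar>\<beta> z\<bar>"] by (auto simp: not_less)
qed (auto simp: chi_eq_self)

section \<open>Integration in time\<close>

definition time_kernel :: "real \<Rightarrow> real \<Rightarrow> real" where
  "time_kernel s t = (if 0 < s \<and> s < t then 1 else if t < s \<and> s < 0 then -1 else 0)"

lemma borel_measurable_time_kernel[measurable]:
  assumes [measurable]: "f \<in> borel_measurable M" "g \<in> borel_measurable M"
  shows "(\<lambda>x. time_kernel (f x) (g x)) \<in> borel_measurable M"
  unfolding time_kernel_def by measurable

lemma abs_time_kernel_le: "\<bar>time_kernel s t\<bar> \<le> 1"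
  by (simp add: time_kernel_def)

lemma interval_integral_eq_time_kernel:
  fixes f :: "real \<Rightarrow> real"
  assumes t: "t \<in> {-\<tau>..\<tau>}"
  shows "(LBINT s=0..t. f s) = (\<integral>s. time_kernel s t * (indicator {-\<tau>..\<tau>} s * f s) \<partial>lborel)"
proof (cases "0 \<le> t")
  case True
  have "(LBINT s=0..t. f s) = (\<integral>s. indicator {0<..<t} s * f s \<partial>lborel)"
    using True by (simp add: interval_lebesgue_integral_def set_lebesgue_integral_def zero_ereal_def einterval_eq_Icc)
  also have "\<dots> = (\<integral>s. time_kernel s t * (indicator {-\<tau>..\<tau>} s * f s) \<partial>lborel)"
    by (rule Bochner_Integration.integral_cong) (use True t in \<open>auto simp: time_kernel_def indicator_def\<close>)
  finally show ?thesis .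
next
  case False
  have "(LBINT s=0..t. f s) = (\<integral>s. - (indicator {t<..<0} s * f s) \<partial>lborel)"
    using False by (simp add: interval_lebesgue_integral_def set_lebesgue_integral_def zero_ereal_def einterval_eq_Icc)
  also have "\<dots> = (\<integral>s. time_kernel s t * (indicator {-\<tau>..\<tau>} s * f s) \<partial>lborel)"
    by (rule Bochner_Integration.integral_cong) (use False t in \<open>auto simp: time_kernel_def indicator_def\<close>)
  finally show ?thesis .
qed

lemma integrable_time_kernel_mult:
  fixes f :: "real \<Rightarrow> real"
  assumes "integrable lborel f"
  shows "integrable lborel (\<lambda>s. time_kernel s t * f s)" "integrable lborel (\<lambda>t. f t * time_kernel s t)"
    and "\<bar>\<integral>s. time_kernel s t * f s \<partial>lborel\<bar> \<le> (\<integral>s. \<bar>f s\<bar> \<partial>lborel)"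
    and "\<bar>\<integral>t. f t * time_kernel s t \<partial>lborel\<bar> \<le> (\<integral>t. \<bar>f t\<bar> \<partial>lborel)"
proof -
  have f: "f \<in> borel_measurable lborel" using assms by auto
  show i1: "integrable lborel (\<lambda>s. time_kernel s t * f s)"
    by (rule Bochner_Integration.integrable_bound[OF integrable_abs[OF assms]])
      (use f abs_time_kernel_le in \<open>auto simp: abs_mult intro!: AE_I2 mult_left_le_one_le\<close>)
  show i2: "integrable lborel (\<lambda>t. f t * time_kernel s t)"
    by (rule Bochner_Integration.integrable_bound[OF integrable_abs[OF assms]])
      (use f abs_time_kernel_le in \<open>auto simp: abs_mult intro!: AE_I2 mult_left_le\<close>)
  show "\<bar>\<integral>s. time_kernel s t * f s \<partial>lborel\<bar> \<le> (\<integral>s. \<bar>f s\<bar> \<partial>lborel)"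
    by (rule order_trans[OF integral_abs_bound integral_mono[OF integrable_abs[OF i1] integrable_abs[OF assms]]])
      (use abs_time_kernel_le in \<open>auto simp: abs_mult intro: mult_left_le_one_le\<close>)
  show "\<bar>\<integral>t. f t * time_kernel s t \<partial>lborel\<bar> \<le> (\<integral>t. \<bar>f t\<bar> \<partial>lborel)"
    by (rule order_trans[OF integral_abs_bound integral_mono[OF integrable_abs[OF i2] integrable_abs[OF assms]]])
      (use abs_time_kernel_le in \<open>auto simp: abs_mult intro: mult_left_le\<close>)
qed

lemma integrable_indicator_mult_if_Lp_restrict:
  fixes g :: "real \<Rightarrow> real"
  assumes g: "Lp r (restrict_space lborel {a..b}) g" and r: "1 \<le> r"
  shows "integrable lborel (\<lambda>t. indicator {a..b} t * g t)"
proof (rule Bochner_Integration.integrable_bound)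
  show "integrable lborel (\<lambda>t. indicator {a..b} t + indicator {a..b} t * \<bar>g t\<bar> powr r :: real)"
    using g by (auto simp: Lp_def integrable_restrict_space emeasure_lborel_Icc_eq
      intro!: integrable_real_indicator)
  show "(\<lambda>t. indicator {a..b} t * g t) \<in> borel_measurable lborel"
    using g by (auto simp: Lp_def borel_measurable_restrict_space_iff)
  have "\<bar>x\<bar> \<le> 1 + \<bar>x\<bar> powr r" for x :: real
    using powr_le_one_add_powr[of 1 r "\<bar>x\<bar>"] r by simp
  then show "AE t in lborel. norm (indicator {a..b} t * g t) \<le>
      norm (indicator {a..b} t + indicator {a..b} t * \<bar>g t\<bar> powr r :: real)"
    by (intro AE_I2) (auto simp: indicator_def)
qed

lemma Lp_interval_integral:
  fixes f :: "real \<Rightarrow> real"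
  assumes f: "integrable lborel (\<lambda>s. indicator {-\<tau>..\<tau>} s * f s)" and p: "0 < p"
  shows "Lp p (restrict_space lborel {-\<tau>..\<tau>}) (\<lambda>t. LBINT s=0..t. f s)"
proof -
  define M where "M = restrict_space lborel {-\<tau>..\<tau>}"
  define F where "F t = (\<integral>s. time_kernel s t * (indicator {-\<tau>..\<tau>} s * f s) \<partial>lborel)" for t
  define C where "C = (\<integral>s. \<bar>indicator {-\<tau>..\<tau>} s * f s\<bar> \<partial>lborel)"
  interpret finite_measure M
    unfolding M_def by (rule finite_measureI) (simp add: emeasure_restrict_space emeasure_lborel_Icc_eq)
  have F: "(LBINT s=0..t. f s) = F t" if "t \<in> space M" for t
    using that by (simp add: F_def M_def interval_integral_eq_time_kernel)
  have "F \<in> borel_measurable lborel"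
    unfolding F_def by (rule lborel.borel_measurable_lebesgue_integral) (use f in measurable)
  then have "(\<lambda>t. LBINT s=0..t. f s) \<in> borel_measurable M"
    by (subst measurable_cong[OF F]) (auto simp: M_def intro: measurable_restrict_space1)
  moreover have "\<bar>F t\<bar> \<le> C" for t
    unfolding F_def C_def by (rule integrable_time_kernel_mult(3)[OF f])
  ultimately show ?thesis
    unfolding M_def[symmetric] Lp_def using F p
    by (auto intro!: integrable_const_bound[where B="C powr p"] AE_I2 powr_mono2)
qed

definition time_kernel_adjoint :: "real \<Rightarrow> (real \<Rightarrow> real) \<Rightarrow> real \<Rightarrow> real" where
  "time_kernel_adjoint \<tau> g s = (\<integral>t. indicator {-\<tau>..\<tau>} t * g t * time_kernel s t \<partial>lborel)"

lemma borel_measurable_time_kernel_adjoint: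
  assumes "integrable lborel (\<lambda>t. indicator {-\<tau>..\<tau>} t * g t)"
  shows "time_kernel_adjoint \<tau> g \<in> borel_measurable lborel"
  unfolding time_kernel_adjoint_def
  by (rule lborel.borel_measurable_lebesgue_integral) (use assms in measurable)

lemma abs_time_kernel_adjoint_le:
  assumes "integrable lborel (\<lambda>t. indicator {-\<tau>..\<tau>} t * g t)"
  shows "\<bar>time_kernel_adjoint \<tau> g s\<bar> \<le> (\<integral>t. \<bar>indicator {-\<tau>..\<tau>} t * g t\<bar> \<partial>lborel)"
  unfolding time_kernel_adjoint_def using integrable_time_kernel_mult(4)[OF assms] by simp

lemma integral_interval_integral_mult:
  fixes f g :: "real \<Rightarrow> real"
  assumes f: "integrable lborel (\<lambda>s. indicator {-\<tau>..\<tau>} s * f s)"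
    and g: "integrable lborel (\<lambda>t. indicator {-\<tau>..\<tau>} t * g t)"
  shows "(\<integral>t. (LBINT s=0..t. f s) * g t \<partial>restrict_space lborel {-\<tau>..\<tau>})
    = (\<integral>s. time_kernel_adjoint \<tau> g s * (indicator {-\<tau>..\<tau>} s * f s) \<partial>lborel)"
proof -
  define f\<tau> where "f\<tau> s = indicator {-\<tau>..\<tau>} s * f s" for s
  define g\<tau> where "g\<tau> t = indicator {-\<tau>..\<tau>} t * g t" for t
  have [measurable]: "f\<tau> \<in> borel_measurable lborel" "g\<tau> \<in> borel_measurable lborel"
    using f g by (auto simp: f\<tau>_def[abs_def] g\<tau>_def[abs_def])
  have "(\<integral>t. (LBINT s=0..t. f s) * g t \<partial>restrict_space lborel {-\<tau>..\<tau>})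
      = (\<integral>t. g\<tau> t * (\<integral>s. time_kernel s t * f\<tau> s \<partial>lborel) \<partial>lborel)"
    by (subst integral_restrict_space)
      (auto intro!: Bochner_Integration.integral_cong simp: interval_integral_eq_time_kernel
        g\<tau>_def f\<tau>_def indicator_def)
  also have "\<dots> = (\<integral>t. \<integral>s. g\<tau> t * time_kernel s t * f\<tau> s \<partial>lborel \<partial>lborel)"
    by (simp add: mult.assoc)
  also have "\<dots> = (\<integral>s. \<integral>t. g\<tau> t * time_kernel s t * f\<tau> s \<partial>lborel \<partial>lborel)"
  proof (rule lborel_pair.Fubini_integral[symmetric])
    have "integrable (lborel \<Otimes>\<^sub>M lborel) (\<lambda>(t, s). \<bar>g\<tau> t\<bar> * \<bar>f\<tau> s\<bar>)"
      using f g by (intro lborel_pair.Fubini_integrable)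
        (auto simp: f\<tau>_def[abs_def] g\<tau>_def[abs_def] intro!: integrable_mult_left integrable_abs)
    then show "integrable (lborel \<Otimes>\<^sub>M lborel) (\<lambda>(t, s). g\<tau> t * time_kernel s t * f\<tau> s)"
    proof (rule Bochner_Integration.integrable_bound)
      show "AE z in lborel \<Otimes>\<^sub>M lborel. norm (case z of (t, s) \<Rightarrow> g\<tau> t * time_kernel s t * f\<tau> s)
          \<le> norm (case z of (t, s) \<Rightarrow> \<bar>g\<tau> t\<bar> * \<bar>f\<tau> s\<bar>)"
        using abs_time_kernel_le
        by (intro AE_I2) (auto simp: abs_mult intro!: mult_right_mono mult_left_le)
    qed measurable
  qed
  also have "\<dots> = (\<integral>s. time_kernel_adjoint \<tau> g s * f\<tau> s \<partial>lborel)"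
    by (simp add: time_kernel_adjoint_def g\<tau>_def)
  finally show ?thesis by (simp add: f\<tau>_def)
qed

lemma Lp_interval_integral_space_integral:
  fixes G :: "real \<times> 'b::euclidean_space \<Rightarrow> real"
  assumes G: "integrable (lborel \<Otimes>\<^sub>M lborel) (\<lambda>z. indicator {-\<tau>..\<tau>} (fst z) * G z)" and p: "0 < p"
  shows "Lp p (restrict_space lborel {-\<tau>..\<tau>}) (\<lambda>t. LBINT s=0..t. \<integral>x. G (s, x) \<partial>lborel)"
  using Lp_interval_integral[OF _ p] lborel_pair.integrable_fst'[OF G] by simp

lemma integral_interval_integral_space_integral:
  fixes G :: "real \<times> 'b::euclidean_space \<Rightarrow> real" and g :: "real \<Rightarrow> real"
  assumes G: "integrable (lborel \<Otimes>\<^sub>M lborel) (\<lambda>z. indicator {-\<tau>..\<tau>} (fst z) * G z)"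
    and g: "integrable lborel (\<lambda>t. indicator {-\<tau>..\<tau>} t * g t)"
  shows "(\<integral>t. (LBINT s=0..t. \<integral>x. G (s, x) \<partial>lborel) * g t \<partial>restrict_space lborel {-\<tau>..\<tau>})
    = (\<integral>z. time_kernel_adjoint \<tau> g (fst z) * (indicator {-\<tau>..\<tau>} (fst z) * G z) \<partial>(lborel \<Otimes>\<^sub>M lborel))"
proof -
  have int: "integrable (lborel \<Otimes>\<^sub>M lborel)
      (\<lambda>z. time_kernel_adjoint \<tau> g (fst z) * (indicator {-\<tau>..\<tau>} (fst z) * G z))"
  proof (rule Bochner_Integration.integrable_bound[OF integrable_mult_right[OF integrable_abs[OF G]]])
    have "time_kernel_adjoint \<tau> g \<in> borel_measurable lborel"
      by (rule borel_measurable_time_kernel_adjoint[OF g])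
    then show "(\<lambda>z. time_kernel_adjoint \<tau> g (fst z) * (indicator {-\<tau>..\<tau>} (fst z) * G z))
        \<in> borel_measurable (lborel \<Otimes>\<^sub>M lborel)"
      using G by measurable
    show "AE z in lborel \<Otimes>\<^sub>M lborel.
        norm (time_kernel_adjoint \<tau> g (fst z) * (indicator {-\<tau>..\<tau>} (fst z) * G z))
        \<le> norm ((\<integral>t. \<bar>indicator {-\<tau>..\<tau>} t * g t\<bar> \<partial>lborel) * \<bar>indicator {-\<tau>..\<tau>} (fst z) * G z\<bar>)"
      using abs_time_kernel_adjoint_le[OF g]
      by (intro AE_I2) (auto simp: abs_mult intro!: mult_right_mono)
  qed
  have "integrable lborel (\<lambda>s. indicator {-\<tau>..\<tau>} s * (\<integral>x. G (s, x) \<partial>lborel))"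
    using lborel_pair.integrable_fst'[OF G] by simp
  then have "(\<integral>t. (LBINT s=0..t. \<integral>x. G (s, x) \<partial>lborel) * g t \<partial>restrict_space lborel {-\<tau>..\<tau>})
    = (\<integral>s. \<integral>x. time_kernel_adjoint \<tau> g s * (indicator {-\<tau>..\<tau>} s * G (s, x)) \<partial>lborel \<partial>lborel)"
    by (simp add: integral_interval_integral_mult[OF _ g])
  also have "\<dots> = (\<integral>z. time_kernel_adjoint \<tau> g (fst z) * (indicator {-\<tau>..\<tau>} (fst z) * G z)
      \<partial>(lborel \<Otimes>\<^sub>M lborel))"
    using lborel_pair.integral_fst'[OF int] by simp
  finally show ?thesis .
qed

lemma Lp_time_kernel_adjoint_mult:
  fixes k :: "real \<times> 'b::euclidean_space \<Rightarrow> real"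
  assumes k: "Lp r (lborel \<Otimes>\<^sub>M lborel) k" and r: "0 < r"
    and g: "integrable lborel (\<lambda>t. indicator {-\<tau>..\<tau>} t * g t)"
  shows "Lp r (lborel \<Otimes>\<^sub>M lborel) (\<lambda>z. time_kernel_adjoint \<tau> g (fst z) * k z)"
proof (rule Lp_dominated[OF Lp_cmult[OF k, of "\<integral>t. \<bar>indicator {-\<tau>..\<tau>} t * g t\<bar> \<partial>lborel"] _ _ r])
  show "(\<lambda>z. time_kernel_adjoint \<tau> g (fst z) * k z) \<in> borel_measurable (lborel \<Otimes>\<^sub>M lborel)"
    using k borel_measurable_time_kernel_adjoint[OF g] unfolding Lp_def
    by (intro borel_measurable_times measurable_compose[OF measurable_fst]) auto
  show "\<bar>time_kernel_adjoint \<tau> g (fst z) * k z\<bar> \<le>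
      \<bar>(\<integral>t. \<bar>indicator {-\<tau>..\<tau>} t * g t\<bar> \<partial>lborel) * k z\<bar>" for z
    using abs_time_kernel_adjoint_le[OF g, of "fst z"] by (auto simp: abs_mult intro!: mult_right_mono)
qed

lemma interval_integral_sum_product:
  fixes \<kappa> U :: "'i::finite \<Rightarrow> real \<Rightarrow> 'b::euclidean_space \<Rightarrow> real" and \<psi> :: "'i \<Rightarrow> 'b \<Rightarrow> real"
  defines "F \<equiv> \<lambda>t. LBINT s=0..t. \<integral>x. (\<Sum>i\<in>UNIV. \<kappa> i s x * U i s x * \<psi> i x) \<partial>lborel"
  assumes p: "1 < p"
    and \<kappa>: "\<And>i. Lp (p / (p - 1)) (lborel \<Otimes>\<^sub>M lborel)
          (\<lambda>(s, x). indicator {-\<tau>..\<tau>} s * \<kappa> i s x * \<psi> i x)"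
    and U: "\<And>i. Lp p (lborel \<Otimes>\<^sub>M lborel) (\<lambda>(s, x). U i s x)"
  shows "Lp p (restrict_space lborel {-\<tau>..\<tau>}) F"
    and "integrable lborel (\<lambda>t. indicator {-\<tau>..\<tau>} t * g t) \<Longrightarrow>
      (\<integral>t. F t * g t \<partial>restrict_space lborel {-\<tau>..\<tau>}) =
      (\<Sum>i\<in>UNIV. \<integral>z. U i (fst z) (snd z) * (time_kernel_adjoint \<tau> g (fst z) *
          (indicator {-\<tau>..\<tau>} (fst z) * \<kappa> i (fst z) (snd z) * \<psi> i (snd z))) \<partial>(lborel \<Otimes>\<^sub>M lborel))"
proof -
  let ?N = "lborel \<Otimes>\<^sub>M lborel :: (real \<times> 'b) measure"
  define G where "G z = (\<Sum>i\<in>UNIV. \<kappa> i (fst z) (snd z) * U i (fst z) (snd z) * \<psi> i (snd z))" for z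
  have summand: "integrable ?N (\<lambda>z. U i (fst z) (snd z) *
      (indicator {-\<tau>..\<tau>} (fst z) * \<kappa> i (fst z) (snd z) * \<psi> i (snd z)))" for i
    using integrable_mult_Lp_conjugate[OF p U \<kappa>] by (simp add: case_prod_beta')
  have G: "integrable ?N (\<lambda>z. indicator {-\<tau>..\<tau>} (fst z) * G z)"
  proof -
    have "integrable ?N (\<lambda>z. \<Sum>i\<in>UNIV. U i (fst z) (snd z) *
        (indicator {-\<tau>..\<tau>} (fst z) * \<kappa> i (fst z) (snd z) * \<psi> i (snd z)))"
      using summand by (rule Bochner_Integration.integrable_sum)
    then show ?thesis by (simp add: G_def sum_distrib_left algebra_simps)
  qed
  have F: "F = (\<lambda>t. LBINT s=0..t. \<integral>x. G (s, x) \<partial>lborel)" by (simp add: F_def G_def)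
  show "Lp p (restrict_space lborel {-\<tau>..\<tau>}) F"
    unfolding F using p by (intro Lp_interval_integral_space_integral[OF G]) simp
  assume g: "integrable lborel (\<lambda>t. indicator {-\<tau>..\<tau>} t * g t)"
  have "(\<integral>t. F t * g t \<partial>restrict_space lborel {-\<tau>..\<tau>}) = (\<integral>z. (\<Sum>i\<in>UNIV. U i (fst z) (snd z) *
      (time_kernel_adjoint \<tau> g (fst z) * (indicator {-\<tau>..\<tau>} (fst z) * \<kappa> i (fst z) (snd z) * \<psi> i (snd z)))) \<partial>?N)"
    unfolding F integral_interval_integral_space_integral[OF G g]
    by (simp add: G_def sum_distrib_left algebra_simps)
  also have "\<dots> = (\<Sum>i\<in>UNIV. \<integral>z. U i (fst z) (snd z) * (time_kernel_adjoint \<tau> g (fst z) *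
      (indicator {-\<tau>..\<tau>} (fst z) * \<kappa> i (fst z) (snd z) * \<psi> i (snd z))) \<partial>?N)"
  proof (rule Bochner_Integration.integral_sum)
    fix i
    from integrable_mult_Lp_conjugate[OF p U Lp_time_kernel_adjoint_mult[OF \<kappa> _ g]] p
    show "integrable ?N (\<lambda>z. U i (fst z) (snd z) * (time_kernel_adjoint \<tau> g (fst z) *
        (indicator {-\<tau>..\<tau>} (fst z) * \<kappa> i (fst z) (snd z) * \<psi> i (snd z))))"
      by (simp add: case_prod_beta')
  qed
  finally show "(\<integral>t. F t * g t \<partial>restrict_space lborel {-\<tau>..\<tau>}) = \<dots>" .
qed

lemma weak_conv_Lp_interval_integral_truncated:
  fixes \<beta> :: "'i::finite \<Rightarrow> real \<Rightarrow> 'b::euclidean_space \<Rightarrow> real" and \<psi> :: "'i \<Rightarrow> 'b \<Rightarrow> real"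
    and Vs :: "nat \<Rightarrow> 'i \<Rightarrow> real \<Rightarrow> 'b \<Rightarrow> real" and V :: "'i \<Rightarrow> real \<Rightarrow> 'b \<Rightarrow> real"
  assumes p: "1 < p"
    and \<beta>: "\<And>i. (\<lambda>(s, x). \<beta> i s x) \<in> borel_measurable (lborel \<Otimes>\<^sub>M lborel)"
    and \<psi>: "\<And>i. \<psi> i \<in> borel_measurable lborel"
    and Lp: "\<And>i. Lp (p / (p - 1)) (lborel \<Otimes>\<^sub>M lborel)
              (\<lambda>(s, x). indicator {-\<tau>..\<tau>} s * \<beta> i s x * \<psi> i x)"
    and weak: "\<And>i. weak_conv_Lp p (lborel \<Otimes>\<^sub>M lborel) (\<lambda>m (s, x). Vs m i s x) (\<lambda>(s, x). V i s x)"
  shows "weak_conv_Lp p (restrict_space lborel {-\<tau>..\<tau>})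
     (\<lambda>m t. LBINT s=0..t. \<integral>x. (\<Sum>i\<in>UNIV. chi m (\<beta> i s x) * Vs m i s x * \<psi> i x) \<partial>lborel)
     (\<lambda>t. LBINT s=0..t. \<integral>x. (\<Sum>i\<in>UNIV. \<beta> i s x * V i s x * \<psi> i x) \<partial>lborel)"
proof -
  let ?N = "lborel \<Otimes>\<^sub>M lborel :: (real \<times> 'b) measure"
  have q: "0 < p / (p - 1)" using p by simp
  have Vs: "Lp p ?N (\<lambda>(s, x). Vs m i s x)" and V: "Lp p ?N (\<lambda>(s, x). V i s x)" for m i
    using weak by (simp_all add: weak_conv_Lp_def)
  have Lp_chi: "Lp (p / (p - 1)) ?N (\<lambda>(s, x). indicator {-\<tau>..\<tau>} s * chi m (\<beta> i s x) * \<psi> i x)"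
    for m i
  proof (rule Lp_dominated[OF Lp _ _ q])
    show "(\<lambda>(s, x). indicator {-\<tau>..\<tau>} s * chi m (\<beta> i s x) * \<psi> i x) \<in> borel_measurable ?N"
      using \<beta> \<psi> by (simp add: split_beta') measurable
    show "\<bar>case z of (s, x) \<Rightarrow> indicator {-\<tau>..\<tau>} s * chi m (\<beta> i s x) * \<psi> i x\<bar>
        \<le> \<bar>case z of (s, x) \<Rightarrow> indicator {-\<tau>..\<tau>} s * \<beta> i s x * \<psi> i x\<bar>" for z
      using abs_chi_le[of m "\<beta> i (fst z) (snd z)"]
      by (auto simp: split_beta' abs_mult intro!: mult_right_mono mult_left_mono)
  qed
  note trunc = interval_integral_sum_product[where \<kappa>="\<lambda>i s x. chi m (\<beta> i s x)" and U="Vs m" for m,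
      OF p Lp_chi Vs]
  note limit = interval_integral_sum_product[where \<kappa>=\<beta> and U=V, OF p Lp V]
  show ?thesis unfolding weak_conv_Lp_def
  proof (intro conjI allI impI trunc(1) limit(1))
    fix g assume "Lp (p / (p - 1)) (restrict_space lborel {-\<tau>..\<tau>}) g"
    then have g: "integrable lborel (\<lambda>t. indicator {-\<tau>..\<tau>} t * g t)"
      using p by (intro integrable_indicator_mult_if_Lp_restrict) (auto simp: field_simps)
    show "(\<lambda>m. \<integral>t. (LBINT s=0..t. \<integral>x. (\<Sum>i\<in>UNIV. chi m (\<beta> i s x) * Vs m i s x * \<psi> i x) \<partial>lborel) * g t
        \<partial>restrict_space lborel {-\<tau>..\<tau>})
      \<longlonglongrightarrow> (\<integral>t. (LBINT s=0..t. \<integral>x. (\<Sum>i\<in>UNIV. \<beta> i s x * V i s x * \<psi> i x) \<partial>lborel) * g t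
        \<partial>restrict_space lborel {-\<tau>..\<tau>})"
      unfolding trunc(2)[OF g] limit(2)[OF g]
    proof (rule tendsto_sum)
      fix i
      define h where "h z = time_kernel_adjoint \<tau> g (fst z) * (indicator {-\<tau>..\<tau>} (fst z) * \<psi> i (snd z))"
        for z :: "real \<times> 'b"
      have "Lp (p / (p - 1)) ?N (\<lambda>z. time_kernel_adjoint \<tau> g (fst z) *
          (case z of (s, x) \<Rightarrow> indicator {-\<tau>..\<tau>} s * \<beta> i s x * \<psi> i x))"
        by (rule Lp_time_kernel_adjoint_mult[OF Lp q g])
      then have "(\<lambda>m. \<integral>z. (case z of (s, x) \<Rightarrow> Vs m i s x) * (h z * chi m (\<beta> i (fst z) (snd z))) \<partial>?N)
          \<longlonglongrightarrow> (\<integral>z. (case z of (s, x) \<Rightarrow> V i s x) * (h z * \<beta> i (fst z) (snd z)) \<partial>?N)"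
        using \<beta> \<psi> borel_measurable_time_kernel_adjoint[OF g]
        by (intro weak_conv_Lp_tendsto_truncated[OF p weak])
          (auto simp: h_def split_beta' ac_simps space_pair_measure intro!: measurable_compose[OF measurable_fst])
      then show "(\<lambda>m. \<integral>z. Vs m i (fst z) (snd z) * (time_kernel_adjoint \<tau> g (fst z) *
          (indicator {-\<tau>..\<tau>} (fst z) * chi m (\<beta> i (fst z) (snd z)) * \<psi> i (snd z))) \<partial>?N)
        \<longlonglongrightarrow> (\<integral>z. V i (fst z) (snd z) * (time_kernel_adjoint \<tau> g (fst z) *
          (indicator {-\<tau>..\<tau>} (fst z) * \<beta> i (fst z) (snd z) * \<psi> i (snd z))) \<partial>?N)"
        by (simp add: h_def split_beta' ac_simps)
    qed
  qed
qed

section \<open>Local integrability of the coefficients\<close>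

lemma powr_le_two_powr_add:
  fixes u v x r :: real
  assumes "0 \<le> x" "0 \<le> u" "0 \<le> v" "x \<le> u + v" "0 < r"
  shows "x powr r \<le> 2 powr r * (u powr r + v powr r)"
proof -
  have "x powr r \<le> (2 * max u v) powr r" using assms by (intro powr_mono2) auto
  also have "\<dots> = 2 powr r * max u v powr r" using assms by (simp add: powr_mult)
  also have "max u v powr r \<le> u powr r + v powr r"
    by (cases "u \<le> v") (auto simp: max_def)
  then have "2 powr r * max u v powr r \<le> 2 powr r * (u powr r + v powr r)"
    by (intro mult_left_mono) auto
  finally show ?thesis .
qed

text \<open>Only the independence of the constant from the function bounded by it matters.\<close>

definition local_Lr_constant :: "real \<Rightarrow> real \<Rightarrow> real \<Rightarrow> real" where
  "local_Lr_constant r \<mu> K = 2 powr r * (1 + (1 + \<mu>) * \<mu> powr (- r) * 2 powr r * (1 + K powr r))"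

lemma local_Lr_constant_pos: "0 < \<mu> \<Longrightarrow> 0 < local_Lr_constant r \<mu> K"
  unfolding local_Lr_constant_def by (intro mult_pos_pos add_pos_nonneg) auto

lemma le_local_Lr_constant:
  fixes r \<mu> K a c :: real
  assumes r: "1 \<le> r" and \<mu>: "0 < \<mu>" and K: "0 \<le> K" and a: "0 \<le> a"
    and c: "0 \<le> c" "c \<le> (a + K) / \<mu>"
  shows "2 powr r * (c + c powr r * \<mu>) \<le> local_Lr_constant r \<mu> K * (1 + a powr r)"
proof -
  define X where "X = (1 + \<mu>) * \<mu> powr (- r) * 2 powr r"
  have X: "0 \<le> X" unfolding X_def using \<mu> by simp
  have "c powr r \<le> ((a + K) / \<mu>) powr r" using c r by (intro powr_mono2) auto
  also have "\<dots> = (a + K) powr r * \<mu> powr (- r)"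
    using \<mu> a K by (simp add: powr_divide powr_minus_divide)
  also have "(a + K) powr r \<le> 2 powr r * (a powr r + K powr r)"
    using a K r by (intro powr_le_two_powr_add) auto
  finally have cr: "c powr r \<le> 2 powr r * (a powr r + K powr r) * \<mu> powr (- r)"
    using \<mu> by (simp add: mult_right_mono)
  have "c + c powr r * \<mu> \<le> 1 + (1 + \<mu>) * c powr r"
    using powr_le_one_add_powr[of 1 r c] r c by (simp add: algebra_simps)
  also have "\<dots> \<le> 1 + X * (a powr r + K powr r)"
    using mult_left_mono[OF cr, of "1 + \<mu>"] \<mu> by (simp add: X_def algebra_simps)
  also have "\<dots> \<le> (1 + X * (1 + K powr r)) * (1 + a powr r)"
    using X by (simp add: algebra_simps)
  finally show ?thesis
    unfolding local_Lr_constant_def X_def[symmetric] by (simp add: mult_left_mono)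
qed

lemma nn_integral_exists_le_average:
  fixes f :: "'a \<Rightarrow> ennreal"
  assumes B: "B \<in> sets M" "emeasure M B = ennreal \<mu>" "0 < \<mu>"
    and f: "(\<integral>\<^sup>+ y. f y * indicator B y \<partial>M) \<le> ennreal A" "0 \<le> A"
  obtains y where "y \<in> B" "f y \<le> ennreal ((A + 1) / \<mu>)"
proof (rule ccontr)
  assume "\<not> thesis"
  with that have less: "ennreal ((A + 1) / \<mu>) < f y" if "y \<in> B" for y
    using \<open>y \<in> B\<close> not_le by blast
  have "ennreal (A + 1) = ennreal ((A + 1) / \<mu>) * emeasure M B"
    using B f by (simp add: ennreal_mult[symmetric])
  also have "\<dots> = (\<integral>\<^sup>+ y. ennreal ((A + 1) / \<mu>) * indicator B y \<partial>M)"
    by (simp add: nn_integral_cmult_indicator[OF B(1)])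
  also have "\<dots> \<le> (\<integral>\<^sup>+ y. f y * indicator B y \<partial>M)"
    by (rule nn_integral_mono) (use less in \<open>auto simp: indicator_def less_imp_le\<close>)
  finally have "ennreal (A + 1) \<le> ennreal A" using f(1) by (rule order_trans)
  then show False using f(2) by (subst (asm) ennreal_le_iff) auto
qed

lemma nn_integral_oscillation_le:
  fixes b :: "'a::euclidean_space \<Rightarrow> real"
  assumes b[measurable]: "b \<in> borel_measurable lborel" and B[measurable]: "B \<in> sets lborel"
    and \<mu>: "emeasure lborel B = ennreal \<mu>" "0 \<le> \<mu>" and r: "0 \<le> r" "r \<le> q"
    and osc: "(\<integral>\<^sup>+ y. (\<integral>\<^sup>+ z. ennreal (\<bar>b y - b z\<bar> powr q) * indicator B z \<partial>lborel) * indicator B y \<partial>lborel)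
      \<le> ennreal K" "0 \<le> K"
  shows "(\<integral>\<^sup>+ y. (\<integral>\<^sup>+ z. ennreal (\<bar>b y - b z\<bar> powr r) * indicator B z \<partial>lborel) * indicator B y \<partial>lborel)
      \<le> ennreal (\<mu> * \<mu> + K)"
proof -
  define Dq where "Dq y = (\<integral>\<^sup>+ z. ennreal (\<bar>b y - b z\<bar> powr q) * indicator B z \<partial>lborel)" for y
  have [measurable]: "Dq \<in> borel_measurable lborel"
    unfolding Dq_def by (rule lborel.borel_measurable_nn_integral) measurable
  have "(\<integral>\<^sup>+ z. ennreal (\<bar>b y - b z\<bar> powr r) * indicator B z \<partial>lborel)
      \<le> (\<integral>\<^sup>+ z. indicator B z + ennreal (\<bar>b y - b z\<bar> powr q) * indicator B z \<partial>lborel)" for y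
  proof (rule nn_integral_mono)
    fix z
    have "ennreal (\<bar>b y - b z\<bar> powr r) \<le> 1 + ennreal (\<bar>b y - b z\<bar> powr q)"
      using ennreal_leI[OF powr_le_one_add_powr[OF r abs_ge_zero, of "b y - b z"]] by simp
    then show "ennreal (\<bar>b y - b z\<bar> powr r) * indicator B z
        \<le> indicator B z + ennreal (\<bar>b y - b z\<bar> powr q) * indicator B z"
      by (auto simp: indicator_def)
  qed
  also have "\<dots> y = ennreal \<mu> + Dq y" for y
    unfolding Dq_def using \<mu> nn_integral_indicator[OF B] by (subst nn_integral_add) auto
  finally have "(\<integral>\<^sup>+ y. (\<integral>\<^sup>+ z. ennreal (\<bar>b y - b z\<bar> powr r) * indicator B z \<partial>lborel) * indicator B y \<partial>lborel)
      \<le> (\<integral>\<^sup>+ y. ennreal \<mu> * indicator B y + Dq y * indicator B y \<partial>lborel)"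
    by (intro nn_integral_mono) (auto simp: indicator_def)
  also have "\<dots> = ennreal \<mu> * ennreal \<mu> + (\<integral>\<^sup>+ y. Dq y * indicator B y \<partial>lborel)"
    using \<mu> nn_integral_cmult_indicator[OF B, of "ennreal \<mu>"] by (subst nn_integral_add) auto
  also have "\<dots> \<le> ennreal (\<mu> * \<mu> + K)"
    using osc \<mu> by (auto simp: Dq_def ennreal_mult ennreal_plus intro: add_left_mono)
  finally show ?thesis .
qed

lemma nn_integral_powr_le_local_Lr_constant:
  fixes b :: "'a::euclidean_space \<Rightarrow> real"
  assumes b[measurable]: "b \<in> borel_measurable lborel" and B[measurable]: "B \<in> sets lborel"
    and \<mu>: "emeasure lborel B = ennreal \<mu>" "0 < \<mu>" and r: "1 \<le> r" "r \<le> q"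
    and osc: "(\<integral>\<^sup>+ y. (\<integral>\<^sup>+ z. ennreal (\<bar>b y - b z\<bar> powr q) * indicator B z \<partial>lborel) * indicator B y \<partial>lborel)
      \<le> ennreal K" "0 \<le> K"
    and a: "(\<integral>\<^sup>+ y. ennreal \<bar>b y\<bar> * indicator B y \<partial>lborel) = ennreal a" "0 \<le> a"
  shows "(\<integral>\<^sup>+ z. ennreal (\<bar>b z\<bar> powr r) * indicator B z \<partial>lborel)
    \<le> ennreal (local_Lr_constant r \<mu> (\<mu> * \<mu> + K + 1) * (1 + a powr r))"
proof -
  define D where "D y = (\<integral>\<^sup>+ z. ennreal (\<bar>b y - b z\<bar> powr r) * indicator B z \<partial>lborel)" for y
  have [measurable]: "D \<in> borel_measurable lborel"
    unfolding D_def by (rule lborel.borel_measurable_nn_integral) measurable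
  have "(\<integral>\<^sup>+ y. (ennreal \<bar>b y\<bar> + D y) * indicator B y \<partial>lborel)
      = ennreal a + (\<integral>\<^sup>+ y. D y * indicator B y \<partial>lborel)"
    unfolding distrib_right by (subst nn_integral_add) (auto simp: a)
  also have "\<dots> \<le> ennreal (a + (\<mu> * \<mu> + K))"
  proof -
    have "(\<integral>\<^sup>+ y. D y * indicator B y \<partial>lborel) \<le> ennreal (\<mu> * \<mu> + K)"
      unfolding D_def using \<mu> r by (intro nn_integral_oscillation_le[OF b B \<mu>(1) _ _ r(2) osc]) auto
    then show ?thesis using a(2) osc(2) \<mu> by (simp add: ennreal_plus add_left_mono)
  qed
  finally have avg: "(\<integral>\<^sup>+ y. (ennreal \<bar>b y\<bar> + D y) * indicator B y \<partial>lborel) \<le> ennreal (a + (\<mu> * \<mu> + K))" .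
  define c where "c = (a + (\<mu> * \<mu> + K) + 1) / \<mu>"
  have c: "0 \<le> c" "c \<le> (a + (\<mu> * \<mu> + K + 1)) / \<mu>" using a \<mu> osc(2) by (simp_all add: c_def ac_simps)
  obtain y0 where y0: "y0 \<in> B" "ennreal \<bar>b y0\<bar> + D y0 \<le> ennreal c"
  proof (rule nn_integral_exists_le_average[OF B \<mu> avg])
    show "0 \<le> a + (\<mu> * \<mu> + K)" using a \<mu> osc(2) by simp
  qed (auto simp: c_def intro: that)
  have "ennreal \<bar>b y0\<bar> \<le> ennreal c" using order_trans[OF _ y0(2), of "ennreal \<bar>b y0\<bar>"] by simp
  then have by0: "\<bar>b y0\<bar> \<le> c" using c(1) by (simp add: ennreal_le_iff)
  have Dy0: "D y0 \<le> ennreal c" using order_trans[OF _ y0(2), of "D y0"] by simp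
  have "(\<integral>\<^sup>+ z. ennreal (\<bar>b z\<bar> powr r) * indicator B z \<partial>lborel)
      \<le> (\<integral>\<^sup>+ z. ennreal (2 powr r) * (ennreal (\<bar>b y0 - b z\<bar> powr r) * indicator B z
           + ennreal (\<bar>b y0\<bar> powr r) * indicator B z) \<partial>lborel)"
  proof (rule nn_integral_mono)
    fix z
    have "\<bar>b z\<bar> powr r \<le> 2 powr r * (\<bar>b y0 - b z\<bar> powr r + \<bar>b y0\<bar> powr r)"
      using r by (intro powr_le_two_powr_add) auto
    then show "ennreal (\<bar>b z\<bar> powr r) * indicator B z \<le> ennreal (2 powr r) *
        (ennreal (\<bar>b y0 - b z\<bar> powr r) * indicator B z + ennreal (\<bar>b y0\<bar> powr r) * indicator B z)"
      by (auto simp: indicator_def ennreal_mult[symmetric] ennreal_plus[symmetric] simp del: ennreal_plus)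
  qed
  also have "\<dots> = ennreal (2 powr r) * (D y0 + ennreal (\<bar>b y0\<bar> powr r) * emeasure lborel B)"
    unfolding D_def using nn_integral_cmult_indicator[OF B, of "ennreal (\<bar>b y0\<bar> powr r)"]
    by (subst nn_integral_cmult) (auto simp: nn_integral_add)
  also have "\<dots> \<le> ennreal (2 powr r) * (ennreal c + ennreal (c powr r) * ennreal \<mu>)"
  proof -
    have "ennreal (\<bar>b y0\<bar> powr r) \<le> ennreal (c powr r)"
      using by0 r by (intro ennreal_leI powr_mono2) auto
    then have "ennreal (\<bar>b y0\<bar> powr r) * ennreal \<mu> \<le> ennreal (c powr r) * ennreal \<mu>"
      by (rule mult_right_mono) simp
    then show ?thesis using Dy0 \<mu> by (intro mult_left_mono add_mono) auto
  qed
  also have "\<dots> = ennreal (2 powr r * (c + c powr r * \<mu>))"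
    using c \<mu> by (simp add: ennreal_mult[symmetric] ennreal_plus[symmetric] del: ennreal_plus)
  also have "\<dots> \<le> ennreal (local_Lr_constant r \<mu> (\<mu> * \<mu> + K + 1) * (1 + a powr r))"
    using osc(2) by (intro ennreal_leI le_local_Lr_constant[OF r(1) \<mu>(2) _ a(2) c]) auto
  finally show ?thesis .
qed
lemma borel_measurable_enn_powr[measurable]:
  assumes f[measurable]: "f \<in> borel_measurable M"
  shows "(\<lambda>x. enn_powr (f x) r) \<in> borel_measurable M"
proof -
  have [measurable]: "{x \<in> space M. f x = \<infinity>} \<in> sets M"
    using measurable_sets[OF f, of "{\<infinity>}"] by (simp add: vimage_def Int_def conj_commute)
  show ?thesis unfolding enn_powr_def by measurable
qed

lemma enn_powr_mono: "e1 \<le> e2 \<Longrightarrow> 0 \<le> r \<Longrightarrow> enn_powr e1 r \<le> enn_powr e2 r"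
  unfolding enn_powr_def
  by (auto simp: top_unique less_top intro!: ennreal_leI powr_mono2 enn2real_mono)

lemma nn_integral_ball_translate:
  fixes b :: "'b::euclidean_space \<Rightarrow> real"
  assumes b: "b \<in> borel_measurable lborel"
  shows "(\<integral>\<^sup>+ y. ennreal \<bar>b y\<bar> * indicator (ball x0 1) y \<partial>lborel) =
    (\<integral>\<^sup>+ y. ennreal \<bar>b (x0 + y)\<bar> * indicator (ball 0 1) y \<partial>lborel)"
proof -
  have [measurable]: "b \<in> borel_measurable borel" "ball x0 1 \<in> sets borel" using b by simp_all
  have [measurable]: "(\<lambda>y. ennreal \<bar>b y\<bar> * indicator (ball x0 1) y) \<in> borel_measurable borel"
    by measurable
  have "(\<integral>\<^sup>+ y. ennreal \<bar>b y\<bar> * indicator (ball x0 1) y \<partial>lborel)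
      = (\<integral>\<^sup>+ y. ennreal \<bar>b (x0 + y)\<bar> * indicator (ball x0 1) (x0 + y) \<partial>lborel)"
    by (subst lborel_distr_plus[symmetric, of x0], subst nn_integral_distr) auto
  also have "\<dots> = (\<integral>\<^sup>+ y. ennreal \<bar>b (x0 + y)\<bar> * indicator (ball 0 1) y \<partial>lborel)"
    by (rule nn_integral_cong) (auto simp: indicator_def dist_norm)
  finally show ?thesis .
qed

lemma nn_integral_ball_powr_le:
  fixes b :: "'b::euclidean_space \<Rightarrow> real" and x0 :: 'b and \<rho> :: real
  defines "\<mu> \<equiv> measure lborel (ball x0 \<rho>)"
  assumes b: "b \<in> borel_measurable lborel" and r: "1 \<le> r" "r \<le> q" and \<rho>: "0 < \<rho>" "\<rho> \<le> 1"
    and osc: "(\<integral>\<^sup>+ y. (\<integral>\<^sup>+ z. ennreal (\<bar>b y - b z\<bar> powr q) * indicator (ball x0 \<rho>) z \<partial>lborel)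
      * indicator (ball x0 \<rho>) y \<partial>lborel) \<le> ennreal K" "0 \<le> K"
  shows "(\<integral>\<^sup>+ x. ennreal (\<bar>b x\<bar> powr r) * indicator (ball x0 \<rho>) x \<partial>lborel)
    \<le> ennreal (local_Lr_constant r \<mu> (\<mu> * \<mu> + K + 1)) *
      (1 + enn_powr (\<integral>\<^sup>+ y. ennreal \<bar>b (x0 + y)\<bar> * indicator (ball 0 1) y \<partial>lborel) r)"
proof -
  define C where "C = local_Lr_constant r \<mu> (\<mu> * \<mu> + K + 1)"
  define A where "A = (\<integral>\<^sup>+ y. ennreal \<bar>b y\<bar> * indicator (ball x0 \<rho>) y \<partial>lborel)"
  have \<mu>: "emeasure lborel (ball x0 \<rho>) = ennreal \<mu>" "0 < \<mu>"
    using emeasure_lborel_ball_finite[of x0 \<rho>] content_ball_pos[OF \<rho>(1), of x0]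
    by (auto simp: \<mu>_def emeasure_eq_ennreal_measure)
  have C: "0 < C" unfolding C_def using \<mu>(2) by (rule local_Lr_constant_pos)
  have "A \<le> (\<integral>\<^sup>+ y. ennreal \<bar>b y\<bar> * indicator (ball x0 1) y \<partial>lborel)"
    unfolding A_def using \<rho> by (intro nn_integral_mono) (auto simp: indicator_def)
  also have "\<dots> = (\<integral>\<^sup>+ y. ennreal \<bar>b (x0 + y)\<bar> * indicator (ball 0 1) y \<partial>lborel)"
    by (rule nn_integral_ball_translate[OF b])
  finally have A: "A \<le> \<dots>" .
  show ?thesis
  proof (cases "A = top")
    case True
    then show ?thesis
      using A C unfolding C_def[symmetric] by (simp add: top_unique enn_powr_def ennreal_mult_top)
  next
    case False
    then obtain a where a: "A = ennreal a" "0 \<le> a" by (cases A) auto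
    have "(\<integral>\<^sup>+ x. ennreal (\<bar>b x\<bar> powr r) * indicator (ball x0 \<rho>) x \<partial>lborel) \<le> ennreal (C * (1 + a powr r))"
      unfolding C_def using a osc(2)
      by (intro nn_integral_powr_le_local_Lr_constant[OF b _ \<mu> r osc]) (auto simp: A_def)
    also have "\<dots> = ennreal C * (1 + enn_powr A r)"
      using C a by (simp add: enn_powr_def ennreal_mult ennreal_plus)
    also have "\<dots> \<le> ennreal C * (1 + enn_powr (\<integral>\<^sup>+ y. ennreal \<bar>b (x0 + y)\<bar> * indicator (ball 0 1) y \<partial>lborel) r)"
      using A r by (intro mult_left_mono add_left_mono enn_powr_mono) auto
    finally show ?thesis unfolding C_def .
  qed
qed
lemma nn_integral_strip_ball_finite:
  fixes \<beta> :: "real \<Rightarrow> 'b::euclidean_space \<Rightarrow> real"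
  assumes \<beta>[measurable]: "(\<lambda>z. \<beta> (fst z) (snd z)) \<in> borel_measurable (lborel \<Otimes>\<^sub>M lborel)"
    and r: "1 \<le> r" "r \<le> q" and \<rho>: "0 < \<rho>" "\<rho> \<le> 1" and K: "0 \<le> K"
    and int: "(\<integral>\<^sup>+ t. enn_powr (\<integral>\<^sup>+ y. ennreal \<bar>\<beta> t (x0 + y)\<bar> * indicator (ball 0 1) y \<partial>lborel) r
               * indicator {-\<tau>..\<tau>} t \<partial>lborel) < \<infinity>"
    and osc: "\<And>t. (\<integral>\<^sup>+ y. (\<integral>\<^sup>+ z. ennreal (\<bar>\<beta> t y - \<beta> t z\<bar> powr q) * indicator (ball x0 \<rho>) z \<partial>lborel)
               * indicator (ball x0 \<rho>) y \<partial>lborel) \<le> ennreal K"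
  shows "(\<integral>\<^sup>+ z. ennreal (\<bar>\<beta> (fst z) (snd z)\<bar> powr r) * indicator ({-\<tau>..\<tau>} \<times> ball x0 \<rho>) z
            \<partial>(lborel \<Otimes>\<^sub>M lborel)) < \<infinity>"
proof -
  define \<mu> where "\<mu> = measure lborel (ball x0 \<rho>)"
  define C where "C = local_Lr_constant r \<mu> (\<mu> * \<mu> + K + 1)"
  define A where "A t = (\<integral>\<^sup>+ y. ennreal \<bar>\<beta> t (x0 + y)\<bar> * indicator (ball 0 1) y \<partial>lborel)" for t
  have \<beta>t: "\<beta> t \<in> borel_measurable lborel" for t
    using measurable_Pair2[OF \<beta>, of t] by simp
  have [measurable]: "A \<in> borel_measurable lborel" unfolding A_def
  proof (rule lborel.borel_measurable_nn_integral)
    have [measurable]: "(\<lambda>z. \<beta> (fst z) (x0 + snd z)) \<in> borel_measurable (lborel \<Otimes>\<^sub>M lborel)"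
      using measurable_compose[OF _ \<beta>, of "\<lambda>z. (fst z, x0 + snd z)"] by simp
    have [measurable]: "ball 0 1 \<in> sets (borel :: 'b measure)" by simp
    show "case_prod (\<lambda>t y. ennreal \<bar>\<beta> t (x0 + y)\<bar> * indicator (ball 0 1) y) \<in> borel_measurable (lborel \<Otimes>\<^sub>M lborel)"
      unfolding split_beta' by measurable
  qed
  have "(\<integral>\<^sup>+ z. ennreal (\<bar>\<beta> (fst z) (snd z)\<bar> powr r) * indicator ({-\<tau>..\<tau>} \<times> ball x0 \<rho>) z \<partial>(lborel \<Otimes>\<^sub>M lborel))
      = (\<integral>\<^sup>+ t. (\<integral>\<^sup>+ x. ennreal (\<bar>\<beta> t x\<bar> powr r) * indicator (ball x0 \<rho>) x \<partial>lborel) * indicator {-\<tau>..\<tau>} t \<partial>lborel)"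
    by (subst lborel.nn_integral_fst[symmetric]) (auto intro!: nn_integral_cong simp: indicator_def)
  also have "\<dots> \<le> (\<integral>\<^sup>+ t. ennreal C * indicator {-\<tau>..\<tau>} t + ennreal C * (enn_powr (A t) r * indicator {-\<tau>..\<tau>} t) \<partial>lborel)"
    using nn_integral_ball_powr_le[OF \<beta>t r \<rho> osc K]
    by (intro nn_integral_mono) (auto simp: C_def \<mu>_def A_def indicator_def distrib_left)
  also have "\<dots> = ennreal C * emeasure lborel {-\<tau>..\<tau>} + ennreal C * (\<integral>\<^sup>+ t. enn_powr (A t) r * indicator {-\<tau>..\<tau>} t \<partial>lborel)"
    by (subst nn_integral_add) (auto simp: nn_integral_cmult nn_integral_cmult_indicator)
  also have "\<dots> < \<infinity>"
    using int by (simp add: A_def ennreal_mult_less_top emeasure_lborel_Icc_eq)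
  finally show ?thesis .
qed
lemma nn_integral_strip_compact_finite:
  fixes \<beta> :: "real \<Rightarrow> 'b::euclidean_space \<Rightarrow> real"
  assumes \<beta>[measurable]: "(\<lambda>z. \<beta> (fst z) (snd z)) \<in> borel_measurable (lborel \<Otimes>\<^sub>M lborel)"
    and r: "1 \<le> r" "r \<le> q" and \<rho>: "0 < \<rho>" "\<rho> \<le> 1" and K: "0 \<le> K"
    and int: "\<And>x0. (\<integral>\<^sup>+ t. enn_powr (\<integral>\<^sup>+ y. ennreal \<bar>\<beta> t (x0 + y)\<bar> * indicator (ball 0 1) y \<partial>lborel) r
               * indicator {-\<tau>..\<tau>} t \<partial>lborel) < \<infinity>"
    and osc: "\<And>t x0. (\<integral>\<^sup>+ y. (\<integral>\<^sup>+ z. ennreal (\<bar>\<beta> t y - \<beta> t z\<bar> powr q) * indicator (ball x0 \<rho>) z \<partial>lborel)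
               * indicator (ball x0 \<rho>) y \<partial>lborel) \<le> ennreal K"
    and S: "compact S"
  shows "(\<integral>\<^sup>+ z. ennreal (\<bar>\<beta> (fst z) (snd z)\<bar> powr r) * indicator ({-\<tau>..\<tau>} \<times> S) z
            \<partial>(lborel \<Otimes>\<^sub>M lborel)) < \<infinity>"
proof -
  obtain F where F: "finite F" "S \<subseteq> (\<Union>c\<in>F. ball c \<rho>)"
  proof (rule compactE_image[OF S, of S "\<lambda>c. ball c \<rho>"])
    show "S \<subseteq> (\<Union>c\<in>S. ball c \<rho>)" using \<rho> by force
  qed (auto intro: that)
  have "(\<integral>\<^sup>+ z. ennreal (\<bar>\<beta> (fst z) (snd z)\<bar> powr r) * indicator ({-\<tau>..\<tau>} \<times> S) z \<partial>(lborel \<Otimes>\<^sub>M lborel))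
      \<le> (\<integral>\<^sup>+ z. (\<Sum>c\<in>F. ennreal (\<bar>\<beta> (fst z) (snd z)\<bar> powr r) * indicator ({-\<tau>..\<tau>} \<times> ball c \<rho>) z)
          \<partial>(lborel \<Otimes>\<^sub>M lborel))"
  proof (rule nn_integral_mono)
    fix z :: "real \<times> 'b"
    show "ennreal (\<bar>\<beta> (fst z) (snd z)\<bar> powr r) * indicator ({-\<tau>..\<tau>} \<times> S) z
        \<le> (\<Sum>c\<in>F. ennreal (\<bar>\<beta> (fst z) (snd z)\<bar> powr r) * indicator ({-\<tau>..\<tau>} \<times> ball c \<rho>) z)"
    proof (cases "z \<in> {-\<tau>..\<tau>} \<times> S")
      case True
      then obtain c where c: "c \<in> F" "snd z \<in> ball c \<rho>" using F(2) by (cases z) auto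
      then have "ennreal (\<bar>\<beta> (fst z) (snd z)\<bar> powr r) * indicator ({-\<tau>..\<tau>} \<times> S) z
          = ennreal (\<bar>\<beta> (fst z) (snd z)\<bar> powr r) * indicator ({-\<tau>..\<tau>} \<times> ball c \<rho>) z"
        using True by (cases z) (auto simp: indicator_def)
      also have "\<dots> \<le> (\<Sum>c\<in>F. ennreal (\<bar>\<beta> (fst z) (snd z)\<bar> powr r) * indicator ({-\<tau>..\<tau>} \<times> ball c \<rho>) z)"
        by (rule member_le_sum[OF c(1)]) (auto simp: F(1))
      finally show ?thesis .
    qed (simp add: indicator_def)
  qed
  also have "\<dots> = (\<Sum>c\<in>F. \<integral>\<^sup>+ z. ennreal (\<bar>\<beta> (fst z) (snd z)\<bar> powr r) * indicator ({-\<tau>..\<tau>} \<times> ball c \<rho>) z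
      \<partial>(lborel \<Otimes>\<^sub>M lborel))"
    by (rule nn_integral_sum) auto
  also have "\<dots> < \<infinity>"
    using F(1) nn_integral_strip_ball_finite[OF \<beta> r \<rho> K int osc] by (simp add: less_top)
  finally show ?thesis .
qed

lemma Lp_strip_coefficient_mult:
  fixes \<beta> :: "real \<Rightarrow> 'b::euclidean_space \<Rightarrow> real" and \<psi> :: "'b \<Rightarrow> real"
  assumes \<beta>[measurable]: "(\<lambda>z. \<beta> (fst z) (snd z)) \<in> borel_measurable (lborel \<Otimes>\<^sub>M lborel)"
    and r: "1 \<le> r" "r \<le> q" and \<rho>: "0 < \<rho>" "\<rho> \<le> 1" and K: "0 \<le> K"
    and int: "\<And>x0. (\<integral>\<^sup>+ t. enn_powr (\<integral>\<^sup>+ y. ennreal \<bar>\<beta> t (x0 + y)\<bar> * indicator (ball 0 1) y \<partial>lborel) r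
               * indicator {-\<tau>..\<tau>} t \<partial>lborel) < \<infinity>"
    and osc: "\<And>t x0. (\<integral>\<^sup>+ y. (\<integral>\<^sup>+ z. ennreal (\<bar>\<beta> t y - \<beta> t z\<bar> powr q) * indicator (ball x0 \<rho>) z \<partial>lborel)
               * indicator (ball x0 \<rho>) y \<partial>lborel) \<le> ennreal K"
    and S: "compact S" and \<psi>: "\<psi> \<in> borel_measurable lborel" "\<And>x. \<bar>\<psi> x\<bar> \<le> C * indicator S x"
  shows "Lp r (lborel \<Otimes>\<^sub>M lborel) (\<lambda>(s, x). indicator {-\<tau>..\<tau>} s * \<beta> s x * \<psi> x)"
proof -
  let ?N = "lborel \<Otimes>\<^sub>M lborel :: (real \<times> 'b) measure"
  let ?f = "\<lambda>(s, x). indicator {-\<tau>..\<tau>} s * \<beta> s x * \<psi> x"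
  have [measurable]: "S \<in> sets borel" "\<psi> \<in> borel_measurable borel"
    using S \<psi>(1) by (simp_all add: compact_imp_closed borel_closed)
  have f: "?f \<in> borel_measurable ?N" unfolding split_beta' by measurable
  have "(\<integral>\<^sup>+ z. ennreal (norm (\<bar>?f z\<bar> powr r)) \<partial>?N)
      \<le> (\<integral>\<^sup>+ z. ennreal (\<bar>C\<bar> powr r) * (ennreal (\<bar>\<beta> (fst z) (snd z)\<bar> powr r) * indicator ({-\<tau>..\<tau>} \<times> S) z) \<partial>?N)"
  proof (rule nn_integral_mono)
    fix z :: "real \<times> 'b"
    obtain s x where z: "z = (s, x)" by (cases z)
    have "\<bar>?f z\<bar> powr r \<le> \<bar>C\<bar> powr r * (\<bar>\<beta> s x\<bar> powr r * indicator ({-\<tau>..\<tau>} \<times> S) z)"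
    proof (cases "s \<in> {-\<tau>..\<tau>} \<and> x \<in> S")
      case True
      have "\<bar>\<beta> s x * \<psi> x\<bar> powr r \<le> (\<bar>\<beta> s x\<bar> * \<bar>C\<bar>) powr r"
        using \<psi>(2)[of x] True r by (intro powr_mono2) (auto simp: abs_mult intro: mult_left_mono)
      then show ?thesis using True by (simp add: z powr_mult abs_mult mult.commute)
    next
      case False
      then have "\<psi> x = 0 \<or> s \<notin> {-\<tau>..\<tau>}" using \<psi>(2)[of x] by (auto simp: indicator_def)
      then show ?thesis using r by (auto simp: z indicator_def)
    qed
    then show "ennreal (norm (\<bar>?f z\<bar> powr r))
        \<le> ennreal (\<bar>C\<bar> powr r) * (ennreal (\<bar>\<beta> (fst z) (snd z)\<bar> powr r) * indicator ({-\<tau>..\<tau>} \<times> S) z)"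
      by (cases "z \<in> {-\<tau>..\<tau>} \<times> S") (auto simp: z ennreal_mult[symmetric] intro!: ennreal_leI)
  qed
  also have "\<dots> < \<infinity>"
    using nn_integral_strip_compact_finite[OF \<beta> r \<rho> K int osc S]
    by (subst nn_integral_cmult) (auto simp: ennreal_mult_less_top)
  finally show ?thesis
    unfolding Lp_def using f by (auto intro!: integrableI_bounded)
qed

lemma borel_measurable_lborel_pair:
  fixes f :: "real \<Rightarrow> 'b::euclidean_space \<Rightarrow> real"
  assumes "(\<lambda>(t, x). f t x) \<in> borel_measurable borel"
  shows "(\<lambda>(t, x). f t x) \<in> borel_measurable (lborel \<Otimes>\<^sub>M lborel)"
  using assms by (simp add: lborel_prod)

lemma Lp_coefficient_mult:
  fixes \<beta> F :: "real \<Rightarrow> 'b::euclidean_space \<Rightarrow> real" and G :: "real \<Rightarrow> 'b \<Rightarrow> 'b \<Rightarrow> real"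
  assumes \<beta>: "(\<lambda>(t, x). \<beta> t x) \<in> borel_measurable borel"
    and F: "\<And>t w. \<bar>\<beta> t w\<bar> \<le> F t w"
    and int: "\<And>x T1 T2. (\<integral>\<^sup>+ t\<in>{T1..T2}. enn_powr (\<integral>\<^sup>+ y\<in>ball 0 1. ennreal (F t (x + y)) \<partial>lborel) r \<partial>lborel) < \<infinity>"
    and G: "\<And>t y z. \<bar>\<beta> t y - \<beta> t z\<bar> powr q \<le> G t y z"
    and osc: "\<And>t x. (\<integral>\<^sup>+ y\<in>ball x \<rho>. \<integral>\<^sup>+ z\<in>ball x \<rho>. ennreal (G t y z) \<partial>lborel \<partial>lborel) \<le> ennreal K"
    and r: "1 \<le> r" "r \<le> q" and \<rho>: "0 < \<rho>" "\<rho> \<le> 1" and K: "0 \<le> K"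
    and S: "compact S" and \<psi>: "\<psi> \<in> borel_measurable lborel" "\<And>x. \<bar>\<psi> x\<bar> \<le> C * indicator S x"
  shows "Lp r (lborel \<Otimes>\<^sub>M lborel) (\<lambda>(s, x). indicator {-\<tau>..\<tau>} s * \<beta> s x * \<psi> x)"
proof (rule Lp_strip_coefficient_mult[OF _ r \<rho> K _ _ S \<psi>])
  show "(\<lambda>z. \<beta> (fst z) (snd z)) \<in> borel_measurable (lborel \<Otimes>\<^sub>M lborel)"
    using borel_measurable_lborel_pair[OF \<beta>] by (simp add: split_beta')
  show "(\<integral>\<^sup>+ t. enn_powr (\<integral>\<^sup>+ y. ennreal \<bar>\<beta> t (x0 + y)\<bar> * indicator (ball 0 1) y \<partial>lborel) r
      * indicator {-\<tau>..\<tau>} t \<partial>lborel) < \<infinity>" for x0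
  proof (rule le_less_trans[OF nn_integral_mono int])
    fix t
    have "(\<integral>\<^sup>+ y. ennreal \<bar>\<beta> t (x0 + y)\<bar> * indicator (ball 0 1) y \<partial>lborel)
        \<le> (\<integral>\<^sup>+ y\<in>ball 0 1. ennreal (F t (x0 + y)) \<partial>lborel)"
      using F by (intro nn_integral_mono) (auto simp: indicator_def intro!: ennreal_leI)
    then show "enn_powr (\<integral>\<^sup>+ y. ennreal \<bar>\<beta> t (x0 + y)\<bar> * indicator (ball 0 1) y \<partial>lborel) r
        * indicator {-\<tau>..\<tau>} t
        \<le> enn_powr (\<integral>\<^sup>+ y\<in>ball 0 1. ennreal (F t (x0 + y)) \<partial>lborel) r * indicator {-\<tau>..\<tau>} t"
      using r by (intro mult_right_mono enn_powr_mono) auto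
  qed
  show "(\<integral>\<^sup>+ y. (\<integral>\<^sup>+ z. ennreal (\<bar>\<beta> t y - \<beta> t z\<bar> powr q) * indicator (ball x0 \<rho>) z \<partial>lborel)
      * indicator (ball x0 \<rho>) y \<partial>lborel) \<le> ennreal K" for t x0
    using G by (intro order_trans[OF _ osc[of t x0]] nn_integral_mono mult_right_mono) (auto intro!: ennreal_leI)
qed

section \<open>Test functions and the assumptions of the theorem\<close>

lemma smooth_fun_differentiable: "smooth_fun f \<Longrightarrow> f differentiable (at x)"
  by (erule smooth_fun.cases) auto

lemma smooth_fun_partial_deriv: "smooth_fun f \<Longrightarrow> smooth_fun (partial_deriv i f)"
  by (erule smooth_fun.cases) auto

lemma smooth_fun_continuous_on: "smooth_fun f \<Longrightarrow> continuous_on UNIV f"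
  by (rule continuous_at_imp_continuous_on)
     (use differentiable_imp_continuous_within smooth_fun_differentiable in blast)

lemma partial_deriv_eq_0_outside_support:
  fixes \<phi> :: "real^'n::finite \<Rightarrow> real"
  assumes \<phi>: "smooth_fun \<phi>" and x: "x \<notin> closure {x. \<phi> x \<noteq> 0}"
  shows "partial_deriv i \<phi> x = 0"
proof -
  have "((\<lambda>_. 0) has_derivative (\<lambda>_. 0)) (at x)" by (rule has_derivative_const)
  then have "(\<phi> has_derivative (\<lambda>_. 0)) (at x)"
    by (rule has_derivative_transform_within_open[of _ _ _ _ "- closure {x. \<phi> x \<noteq> 0}"])
      (use x closure_subset[of "{x. \<phi> x \<noteq> 0}"] in auto)
  moreover have "(\<phi> has_derivative frechet_derivative \<phi> (at x)) (at x)"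
    using smooth_fun_differentiable[OF \<phi>] frechet_derivative_works by blast
  ultimately have "frechet_derivative \<phi> (at x) = (\<lambda>_. 0)" by (rule has_derivative_unique[rotated])
  then show ?thesis by (simp add: partial_deriv_def)
qed

lemma test_fun_partial_deriv:
  fixes \<phi> :: "real^'n::finite \<Rightarrow> real"
  assumes "test_fun \<phi>"
  shows "test_fun (partial_deriv i \<phi>)"
proof -
  have \<phi>: "smooth_fun \<phi>" "compact (closure {x. \<phi> x \<noteq> 0})" using assms by (auto simp: test_fun_def)
  have "{x. partial_deriv i \<phi> x \<noteq> 0} \<subseteq> closure {x. \<phi> x \<noteq> 0}"
    using partial_deriv_eq_0_outside_support[OF \<phi>(1)] by blast
  then have "closure {x. partial_deriv i \<phi> x \<noteq> 0} \<subseteq> closure {x. \<phi> x \<noteq> 0}"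
    by (simp add: closure_minimal)
  then have "closure {x. partial_deriv i \<phi> x \<noteq> 0} = closure {x. \<phi> x \<noteq> 0} \<inter> closure {x. partial_deriv i \<phi> x \<noteq> 0}"
    by blast
  then have "compact (closure {x. partial_deriv i \<phi> x \<noteq> 0})"
    using compact_Int_closed[OF \<phi>(2) closed_closure] by metis
  then show ?thesis using smooth_fun_partial_deriv[OF \<phi>(1)] by (simp add: test_fun_def)
qed

lemma test_fun_bounded_support:
  fixes \<phi> :: "real^'n::finite \<Rightarrow> real"
  assumes "test_fun \<phi>"
  shows "compact (closure {x. \<phi> x \<noteq> 0})" "\<phi> \<in> borel_measurable lborel"
    "\<exists>C. \<forall>x. \<bar>\<phi> x\<bar> \<le> C * indicator (closure {x. \<phi> x \<noteq> 0}) x"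
proof -
  let ?S = "closure {x. \<phi> x \<noteq> 0}"
  have \<phi>: "continuous_on UNIV \<phi>" "compact ?S"
    using assms smooth_fun_continuous_on unfolding test_fun_def by blast+
  then show "compact ?S" "\<phi> \<in> borel_measurable lborel"
    using borel_measurable_continuous_onI[OF \<phi>(1)] by simp_all
  have "bounded (\<phi> ` ?S)"
    by (rule compact_imp_bounded[OF compact_continuous_image[OF continuous_on_subset[OF \<phi>(1)] \<phi>(2)]]) simp
  then obtain C where C: "\<And>y. y \<in> \<phi> ` ?S \<Longrightarrow> norm y \<le> C" unfolding bounded_iff by blast
  have "\<bar>\<phi> x\<bar> \<le> C * indicator ?S x" for x
  proof (cases "x \<in> ?S")
    case True
    then show ?thesis using C[of "\<phi> x"] by simp
  next
    case False
    then have "\<phi> x = 0" using closure_subset[of "{x. \<phi> x \<noteq> 0}"] by blast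
    with False show ?thesis by simp
  qed
  then show "\<exists>C. \<forall>x. \<bar>\<phi> x\<bar> \<le> C * indicator ?S x" by blast
qed

lemma abs_component_powr_le_norm: "0 \<le> q \<Longrightarrow> \<bar>x $ i\<bar> powr q \<le> norm x powr q"
  by (intro powr_mono2 component_le_norm_cart) auto

lemma AssumptionAB_Lp_coefficients_test_fun:
  fixes a :: "'n::finite \<Rightarrow> 'n \<Rightarrow> real \<Rightarrow> real^'n \<Rightarrow> real" and frb b :: "'n \<Rightarrow> real \<Rightarrow> real^'n \<Rightarrow> real"
    and c :: "real \<Rightarrow> real^'n \<Rightarrow> real" and \<psi> :: "real^'n \<Rightarrow> real"
  defines "N \<equiv> lborel \<Otimes>\<^sub>M lborel :: (real \<times> (real^'n)) measure"
  assumes p: "1 < p" and q: "p / (p - 1) \<le> q" and K: "0 \<le> K" and \<rho>1: "0 < \<rho>1" "\<rho>1 \<le> 1"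
    and \<gamma>: "0 \<le> \<gamma>" and A: "AssumptionA p a frb b c" and B: "AssumptionB q K \<rho>1 frb b c \<gamma>"
    and \<psi>: "test_fun \<psi>"
  shows "Lp (p / (p - 1)) N (\<lambda>(s, x). indicator {-\<tau>..\<tau>} s * b i s x * \<psi> x)"
    and "Lp (p / (p - 1)) N (\<lambda>(s, x). indicator {-\<tau>..\<tau>} s * frb i s x * \<psi> x)"
    and "Lp (p / (p - 1)) N (\<lambda>(s, x). indicator {-\<tau>..\<tau>} s * c s x * \<psi> x)"
proof -
  obtain C where "\<And>x. \<bar>\<psi> x\<bar> \<le> C * indicator (closure {x. \<psi> x \<noteq> 0}) x"
    using test_fun_bounded_support(3)[OF \<psi>] by blast
  note \<psi>' = test_fun_bounded_support(1,2)[OF \<psi>] this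
  define F where "F t w = norm (\<chi> i. frb i t w) + norm (\<chi> i. b i t w) + c t w" for t w
  define G where "G t y z = norm ((\<chi> i. frb i t y) - (\<chi> i. frb i t z)) powr q
    + norm ((\<chi> i. b i t y) - (\<chi> i. b i t z)) powr q + \<bar>c t y - c t z\<bar> powr q" for t y z
  define KB where "KB = K * (if q > real CARD('n) then 1 else 0) + \<rho>1 ^ CARD('n) * \<gamma>"
  have r: "1 \<le> p / (p - 1)" "p / (p - 1) \<le> q" and KB: "0 \<le> KB"
    using p q K \<rho>1 \<gamma> by (auto simp: field_simps KB_def)
  then have q0: "0 \<le> q" by linarith
  have meas: "(\<lambda>(t, x). b i t x) \<in> borel_measurable borel" "(\<lambda>(t, x). frb i t x) \<in> borel_measurable borel"
      "(\<lambda>(t, x). c t x) \<in> borel_measurable borel" and c0: "\<And>t x. 0 \<le> c t x"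
    and int: "\<And>x T1 T2. (\<integral>\<^sup>+ t\<in>{T1..T2}. enn_powr (\<integral>\<^sup>+ y\<in>ball 0 1. ennreal (F t (x + y)) \<partial>lborel)
      (p / (p - 1)) \<partial>lborel) < \<infinity>"
    using A unfolding AssumptionA_def F_def by blast+
  have osc: "\<And>t x. (\<integral>\<^sup>+ y\<in>ball x \<rho>1. \<integral>\<^sup>+ z\<in>ball x \<rho>1. ennreal (G t y z) \<partial>lborel \<partial>lborel) \<le> ennreal KB"
    using B unfolding AssumptionB_def G_def KB_def by blast
  have F_ge: "\<bar>b i t w\<bar> \<le> F t w" "\<bar>frb i t w\<bar> \<le> F t w" "\<bar>c t w\<bar> \<le> F t w" for t w
    using component_le_norm_cart[of "\<chi> i. b i t w" i] component_le_norm_cart[of "\<chi> i. frb i t w" i]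
      c0[of t w] norm_ge_zero[of "\<chi> i. b i t w"] norm_ge_zero[of "\<chi> i. frb i t w"]
    by (simp_all add: F_def)
  have G_ge: "\<bar>b i t y - b i t z\<bar> powr q \<le> G t y z" "\<bar>frb i t y - frb i t z\<bar> powr q \<le> G t y z"
    "\<bar>c t y - c t z\<bar> powr q \<le> G t y z" for t y z
  proof -
    have "\<bar>b i t y - b i t z\<bar> powr q \<le> norm ((\<chi> i. b i t y) - (\<chi> i. b i t z)) powr q"
      "\<bar>frb i t y - frb i t z\<bar> powr q \<le> norm ((\<chi> i. frb i t y) - (\<chi> i. frb i t z)) powr q"
      using abs_component_powr_le_norm[OF q0, of "(\<chi> i. b i t y) - (\<chi> i. b i t z)" i]
        abs_component_powr_le_norm[OF q0, of "(\<chi> i. frb i t y) - (\<chi> i. frb i t z)" i] by simp_all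
    moreover have "0 \<le> norm ((\<chi> i. b i t y) - (\<chi> i. b i t z)) powr q"
      "0 \<le> norm ((\<chi> i. frb i t y) - (\<chi> i. frb i t z)) powr q" "0 \<le> \<bar>c t y - c t z\<bar> powr q"
      by simp_all
    ultimately show "\<bar>b i t y - b i t z\<bar> powr q \<le> G t y z" "\<bar>frb i t y - frb i t z\<bar> powr q \<le> G t y z"
      "\<bar>c t y - c t z\<bar> powr q \<le> G t y z"
      unfolding G_def by linarith+
  qed
  show "Lp (p / (p - 1)) N (\<lambda>(s, x). indicator {-\<tau>..\<tau>} s * b i s x * \<psi> x)"
    unfolding N_def by (rule Lp_coefficient_mult[OF meas(1) F_ge(1) int G_ge(1) osc r \<rho>1 KB \<psi>'])
  show "Lp (p / (p - 1)) N (\<lambda>(s, x). indicator {-\<tau>..\<tau>} s * frb i s x * \<psi> x)"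
    unfolding N_def by (rule Lp_coefficient_mult[OF meas(2) F_ge(2) int G_ge(2) osc r \<rho>1 KB \<psi>'])
  show "Lp (p / (p - 1)) N (\<lambda>(s, x). indicator {-\<tau>..\<tau>} s * c s x * \<psi> x)"
    unfolding N_def by (rule Lp_coefficient_mult[OF meas(3) F_ge(3) int G_ge(3) osc r \<rho>1 KB \<psi>'])
qed

theorem lemma6p2:
  fixes p q K \<rho>0 \<rho>1 \<gamma> \<tau> :: real
    and a :: "'n::finite \<Rightarrow> 'n \<Rightarrow> real \<Rightarrow> real^'n \<Rightarrow> real"
    and frb b :: "'n \<Rightarrow> real \<Rightarrow> real^'n \<Rightarrow> real"
    and c :: "real \<Rightarrow> real^'n \<Rightarrow> real"
    and \<phi> :: "real^'n \<Rightarrow> real"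
    and us :: "nat \<Rightarrow> real \<Rightarrow> real^'n \<Rightarrow> real"
    and Dus :: "nat \<Rightarrow> 'n \<Rightarrow> real \<Rightarrow> real^'n \<Rightarrow> real"
    and u :: "real \<Rightarrow> real^'n \<Rightarrow> real"
    and Du :: "'n \<Rightarrow> real \<Rightarrow> real^'n \<Rightarrow> real"
  assumes p: "1 < p"
    and K: "0 \<le> K"
    and rho0: "0 < \<rho>0" "\<rho>0 \<le> 1"
    and rho1: "0 < \<rho>1" "\<rho>1 \<le> 1"
    and q: "q > min (real CARD('n)) p" "q > min (real CARD('n)) (p / (p - 1))"
           "q \<ge> max (real CARD('n)) (max p (p / (p - 1)))"
    and gamma: "0 < \<gamma>" "\<gamma> \<le> 1"
    and A: "AssumptionA p a frb b c"
    and B: "AssumptionB q K \<rho>1 frb b c \<gamma>"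
    and C: "AssumptionC \<rho>0 a \<gamma>"
    and phi: "test_fun \<phi>"
    and tau: "0 < \<tau>"
    and conv: "weak_conv_WW1p p us Dus u Du"
  shows
    "weak_conv_Lp p (restrict_space lborel {-\<tau>..\<tau>})
       (\<lambda>m t. LBINT s=0..t. \<integral>x. (\<Sum>i\<in>UNIV. chi m (b i s x) * Dus m i s x) * \<phi> x \<partial>lborel)
       (\<lambda>t. LBINT s=0..t. \<integral>x. (\<Sum>i\<in>UNIV. b i s x * Du i s x) * \<phi> x \<partial>lborel)
   \<and> weak_conv_Lp p (restrict_space lborel {-\<tau>..\<tau>})
       (\<lambda>m t. LBINT s=0..t. \<integral>x. (\<Sum>i\<in>UNIV. chi m (frb i s x) * us m s x * partial_deriv i \<phi> x) \<partial>lborel)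
       (\<lambda>t. LBINT s=0..t. \<integral>x. (\<Sum>i\<in>UNIV. frb i s x * u s x * partial_deriv i \<phi> x) \<partial>lborel)
   \<and> weak_conv_Lp p (restrict_space lborel {-\<tau>..\<tau>})
       (\<lambda>m t. LBINT s=0..t. \<integral>x. chi m (c s x) * us m s x * \<phi> x \<partial>lborel)
       (\<lambda>t. LBINT s=0..t. \<integral>x. c s x * u s x * \<phi> x \<partial>lborel)"
proof -
  have q': "p / (p - 1) \<le> q" and \<gamma>: "0 \<le> \<gamma>" using q(3) gamma by auto
  note Lp = AssumptionAB_Lp_coefficients_test_fun[OF p q' K rho1 \<gamma> A B, of _ \<tau>]
  have meas: "(\<lambda>(s, x). b i s x) \<in> borel_measurable (lborel \<Otimes>\<^sub>M lborel)"
    "(\<lambda>(s, x). frb i s x) \<in> borel_measurable (lborel \<Otimes>\<^sub>M lborel)"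
    "(\<lambda>(s, x). c s x) \<in> borel_measurable (lborel \<Otimes>\<^sub>M lborel)" for i
    using A unfolding AssumptionA_def by (blast intro: borel_measurable_lborel_pair)+
  have weak: "weak_conv_Lp p (lborel \<Otimes>\<^sub>M lborel) (\<lambda>m (t, x). us m t x) (\<lambda>(t, x). u t x)"
    "weak_conv_Lp p (lborel \<Otimes>\<^sub>M lborel) (\<lambda>m (t, x). Dus m i t x) (\<lambda>(t, x). Du i t x)" for i
    using conv unfolding weak_conv_WW1p_def by blast+
  note \<phi> = test_fun_bounded_support(2)[OF phi] and D\<phi> = test_fun_partial_deriv[OF phi]
  note weak_conv_Lp_interval_integral_truncated[where \<beta>=b and \<psi>="\<lambda>_. \<phi>" and Vs=Dus and V=Du,
      OF p meas(1) \<phi> Lp(1)[OF phi] weak(2)]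
  moreover note weak_conv_Lp_interval_integral_truncated[where \<beta>=frb and \<psi>="\<lambda>i. partial_deriv i \<phi>"
      and Vs="\<lambda>m _. us m" and V="\<lambda>_. u", OF p meas(2) test_fun_bounded_support(2)[OF D\<phi>] Lp(2)[OF D\<phi>] weak(1)]
  moreover note weak_conv_Lp_interval_integral_truncated[where \<beta>="\<lambda>_::unit. c" and \<psi>="\<lambda>_. \<phi>"
      and Vs="\<lambda>m _. us m" and V="\<lambda>_. u", OF p meas(3) \<phi> Lp(3)[OF phi] weak(1)]
  ultimately show ?thesis by (simp add: sum_distrib_right)
qed

end
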